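(* Let $\{\mathcal H,\Gamma\}$ be an isometric boundary pair for $A^*$ with domain $A_*=\operatorname{dom}\Gamma$ dense in $A^*$, and let $\widetilde A=\mathcal J(\Gamma)$ be its main transform. Assume there is a selfadjoint extension $H$ of $A$ with $H\subset A_*$ and a point $x\in\rho(H)\cap\mathbb R$, and let $M(x)=\{\hat h\in\mathcal H^2:\{\{f,xf\},\hat h\}\in\Gamma\text{ for some }f\in\mathfrak H\}$. Then: (i) the following are equivalent: (a) $M(x)$ is a selfadjoint relation in $\mathcal H$ and $0\in\rho(M(x)+xI)$; (b) $x\in\rho(\widetilde A)$; (ii) if (a)/(b) hold, then $\{\mathcal H,\Gamma\}$ is a unitary boundary pair for $A^*$ and its Weyl family $M(\lambda)=\{\hat h:\{\{f,\lambda f\},\hat h\}\in\Gamma\}$, $\lambda\in\mathbb C\setminus\mathbb R$, belongs to $\widetilde{\mathcal R}(\mathcal H)$.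
   Context: $A$ closed symmetric relation in a Hilbert space $\mathfrak H$; $\mathcal H$ a Hilbert space. A linear relation $\Gamma\subset\mathfrak H^2\times\mathcal H^2$ is isometric if $(f',g)-(f,g')=(h',k)-(h,k')$ for all $\{\{f,f'\},\{h,h'\}\},\{\{g,g'\},\{k,k'\}\}\in\Gamma$ and unitary if moreover $\Gamma^{-1}=\Gamma^{[*]}$, where $\Gamma^{[*]}=\{\{\{k,k'\},\{g,g'\}\}:(f',g)-(f,g')=(h',k)-(h,k')\ \forall\{\{f,f'\},\{h,h'\}\}\in\Gamma\}$. An isometric (unitary) boundary pair for $A^*$ is an isometric (unitary) $\Gamma$ with $\operatorname{dom}\Gamma\subset A^*$ dense in $A^*$. Main transform: $\mathcal J(\Gamma)=\{\{\{f,h\},\{f',-h'\}\}:\{\{f,f'\},\{h,h'\}\}\in\Gamma\}$, a linear relation in $\mathfrak H\oplus\mathcal H$. $\widetilde{\mathcal R}(\mathcal H)$ (Nevanlinna families): families of linear relations $M(\lambda)$, $\lambda\in\mathbb C\setminus\mathbb R$, in $\mathcal H$ with $M(\lambda)$ maximal dissipative for $\lambda\in\mathbb C_+$ (maximal accumulative for $\lambda\in\mathbb C_-$), $M(\lambda)^*=M(\bar\lambda)$, and $(M(\lambda)+\mu)^{-1}\in\mathcal B(\mathcal H)$ holomorphic in $\lambda\in\mathbb C_+$ ($\mathbb C_-$) for some (all) $\mu\in\mathbb C_+$ ($\mathbb C_-$). *)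

theory Defs
  imports "HOL-Analysis.Analysis"
begin

class chilbert = real_normed_vector + complete_space +
  fixes scaleC :: "complex \<Rightarrow> 'a \<Rightarrow> 'a" (infixr \<open>*\<^sub>C\<close> 75)
    and cinner :: "'a \<Rightarrow> 'a \<Rightarrow> complex"
  assumes scaleC_of_real: "scaleC (complex_of_real r) x = scaleR r x"
    and scaleC_add_right: "scaleC a (x + y) = scaleC a x + scaleC a y"
    and scaleC_add_left: "scaleC (a + b) x = scaleC a x + scaleC b x"
    and scaleC_scaleC: "scaleC a (scaleC b x) = scaleC (a * b) x"
    and scaleC_one: "scaleC 1 x = x"
    and cinner_add_left: "cinner (x + y) z = cinner x z + cinner y z"
    and cinner_scaleC_left: "cinner (scaleC c x) y = c * cinner x y"
    and cinner_commute: "cinner y x = cnj (cinner x y)"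
    and cinner_self_real: "Im (cinner x x) = 0"
    and cinner_self_nonneg: "0 \<le> Re (cinner x x)"
    and norm_cinner: "norm x = sqrt (Re (cinner x x))"

instantiation prod :: (chilbert, chilbert) chilbert
begin
definition scaleC_prod_def: "scaleC c p = (scaleC c (fst p), scaleC c (snd p))"
definition cinner_prod_def: "cinner p q = cinner (fst p) (fst q) + cinner (snd p) (snd q)"
instance
proof
  fix r :: real and x :: "'a \<times> 'b"
  show "scaleC (complex_of_real r) x = scaleR r x"
    by (simp add: scaleC_prod_def scaleC_of_real scaleR_prod_def)
next
  fix a :: complex and x y :: "'a \<times> 'b"
  show "scaleC a (x + y) = scaleC a x + scaleC a y"
    by (simp add: scaleC_prod_def scaleC_add_right)
next
  fix a b :: complex and x :: "'a \<times> 'b"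
  show "scaleC (a + b) x = scaleC a x + scaleC b x"
    by (simp add: scaleC_prod_def scaleC_add_left)
  show "scaleC a (scaleC b x) = scaleC (a * b) x"
    by (simp add: scaleC_prod_def scaleC_scaleC)
next
  fix x :: "'a \<times> 'b"
  show "scaleC 1 x = x" by (simp add: scaleC_prod_def scaleC_one)
  show "Im (cinner x x) = 0" by (simp add: cinner_prod_def cinner_self_real)
  show "0 \<le> Re (cinner x x)" by (simp add: cinner_prod_def cinner_self_nonneg)
  show "norm x = sqrt (Re (cinner x x))"
    by (simp add: cinner_prod_def norm_prod_def norm_cinner cinner_self_nonneg)
next
  fix x y z :: "'a \<times> 'b" and c :: complex
  show "cinner (x + y) z = cinner x z + cinner y z"
    by (simp add: cinner_prod_def cinner_add_left)
  show "cinner (scaleC c x) y = c * cinner x y"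
    by (simp add: cinner_prod_def scaleC_prod_def cinner_scaleC_left algebra_simps)
  show "cinner y x = cnj (cinner x y)"
    by (simp add: cinner_prod_def cinner_commute[of "fst y"] cinner_commute[of "snd y"])
qed
end

definition csubspace :: "'a::chilbert set \<Rightarrow> bool" where
  "csubspace S \<longleftrightarrow> 0 \<in> S \<and> (\<forall>x\<in>S. \<forall>y\<in>S. x + y \<in> S) \<and> (\<forall>c. \<forall>x\<in>S. scaleC c x \<in> S)"

abbreviation lin_rel :: "('a::chilbert \<times> 'a) set \<Rightarrow> bool" where
  "lin_rel T \<equiv> csubspace T"

definition rel_adj :: "('a::chilbert \<times> 'a) set \<Rightarrow> ('a \<times> 'a) set" where
  "rel_adj T = {(g, g'). \<forall>(f, f') \<in> T. cinner f' g = cinner f g'}"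

definition closed_symmetric :: "('a::chilbert \<times> 'a) set \<Rightarrow> bool" where
  "closed_symmetric A \<longleftrightarrow> lin_rel A \<and> closed A \<and> A \<subseteq> rel_adj A"

definition selfadjoint_rel :: "('a::chilbert \<times> 'a) set \<Rightarrow> bool" where
  "selfadjoint_rel T \<longleftrightarrow> T = rel_adj T"

definition clinear_op :: "('a::chilbert \<Rightarrow> 'b::chilbert) \<Rightarrow> bool" where
  "clinear_op B \<longleftrightarrow> (\<forall>x y. B (x + y) = B x + B y) \<and> (\<forall>c x. B (scaleC c x) = scaleC c (B x))"

definition bounded_op :: "('a::chilbert \<Rightarrow> 'a) \<Rightarrow> bool" where
  "bounded_op B \<longleftrightarrow> clinear_op B \<and> (\<exists>C. \<forall>x. norm (B x) \<le> C * norm x)"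

definition op_graph :: "('a \<Rightarrow> 'a) \<Rightarrow> ('a \<times> 'a) set" where
  "op_graph B = {(u, B u) | u. True}"

text \<open>Resolvent set of a linear relation: \<open>\<lambda> \<in> \<rho>(T)\<close> iff \<open>(T - \<lambda>)\<^sup>-\<^sup>1 \<in> \<B>(\<H>)\<close>,
  where \<open>(T - z)\<^sup>-\<^sup>1 = {{f' - z f, f} : {f, f'} \<in> T}\<close>.\<close>
definition rel_resolvent_set :: "('a::chilbert \<times> 'a) set \<Rightarrow> complex set" where
  "rel_resolvent_set T = {z. \<exists>B. bounded_op B \<and>
      {(f' - scaleC z f, f) | f f'. (f, f') \<in> T} = op_graph B}"

definition rel_plus_scalar :: "('a::chilbert \<times> 'a) set \<Rightarrow> complex \<Rightarrow> ('a \<times> 'a) set" where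
  "rel_plus_scalar T c = {(f, f' + scaleC c f) | f f'. (f, f') \<in> T}"

definition isometric_rel ::
  "(('h::chilbert \<times> 'h) \<times> ('k::chilbert \<times> 'k)) set \<Rightarrow> bool" where
  "isometric_rel \<Gamma> \<longleftrightarrow> csubspace \<Gamma> \<and>
     (\<forall>((f, f'), (h, h')) \<in> \<Gamma>. \<forall>((g, g'), (k, k')) \<in> \<Gamma>.
        cinner f' g - cinner f g' = cinner h' k - cinner h k')"

definition bdry_adj ::
  "(('h::chilbert \<times> 'h) \<times> ('k::chilbert \<times> 'k)) set \<Rightarrow> (('k \<times> 'k) \<times> ('h \<times> 'h)) set" where
  "bdry_adj \<Gamma> = {((k, k'), (g, g')). \<forall>((f, f'), (h, h')) \<in> \<Gamma>.
        cinner f' g - cinner f g' = cinner h' k - cinner h k'}"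

definition unitary_rel ::
  "(('h::chilbert \<times> 'h) \<times> ('k::chilbert \<times> 'k)) set \<Rightarrow> bool" where
  "unitary_rel \<Gamma> \<longleftrightarrow> isometric_rel \<Gamma> \<and> converse \<Gamma> = bdry_adj \<Gamma>"

definition isometric_boundary_pair ::
  "('h::chilbert \<times> 'h) set \<Rightarrow> (('h \<times> 'h) \<times> ('k::chilbert \<times> 'k)) set \<Rightarrow> bool" where
  "isometric_boundary_pair A \<Gamma> \<longleftrightarrow> isometric_rel \<Gamma> \<and> Domain \<Gamma> \<subseteq> rel_adj A
      \<and> rel_adj A \<subseteq> closure (Domain \<Gamma>)"

definition unitary_boundary_pair ::
  "('h::chilbert \<times> 'h) set \<Rightarrow> (('h \<times> 'h) \<times> ('k::chilbert \<times> 'k)) set \<Rightarrow> bool" where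
  "unitary_boundary_pair A \<Gamma> \<longleftrightarrow> unitary_rel \<Gamma> \<and> Domain \<Gamma> \<subseteq> rel_adj A
      \<and> rel_adj A \<subseteq> closure (Domain \<Gamma>)"

definition main_transform ::
  "(('h::chilbert \<times> 'h) \<times> ('k::chilbert \<times> 'k)) set \<Rightarrow> (('h \<times> 'k) \<times> ('h \<times> 'k)) set" where
  "main_transform \<Gamma> = {((f, h), (f', - h')) | f f' h h'. ((f, f'), (h, h')) \<in> \<Gamma>}"

definition weyl_family ::
  "(('h::chilbert \<times> 'h) \<times> ('k::chilbert \<times> 'k)) set \<Rightarrow> complex \<Rightarrow> ('k \<times> 'k) set" where
  "weyl_family \<Gamma> z = {hh. \<exists>f. ((f, scaleC z f), hh) \<in> \<Gamma>}"

definition dissipative_rel :: "('a::chilbert \<times> 'a) set \<Rightarrow> bool" where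
  "dissipative_rel T \<longleftrightarrow> lin_rel T \<and> (\<forall>(f, f') \<in> T. 0 \<le> Im (cinner f' f))"

definition accumulative_rel :: "('a::chilbert \<times> 'a) set \<Rightarrow> bool" where
  "accumulative_rel T \<longleftrightarrow> lin_rel T \<and> (\<forall>(f, f') \<in> T. Im (cinner f' f) \<le> 0)"

definition max_dissipative :: "('a::chilbert \<times> 'a) set \<Rightarrow> bool" where
  "max_dissipative T \<longleftrightarrow> dissipative_rel T \<and> (\<forall>S. dissipative_rel S \<and> T \<subseteq> S \<longrightarrow> S = T)"

definition max_accumulative :: "('a::chilbert \<times> 'a) set \<Rightarrow> bool" where
  "max_accumulative T \<longleftrightarrow> accumulative_rel T \<and> (\<forall>S. accumulative_rel S \<and> T \<subseteq> S \<longrightarrow> S = T)"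

definition op_holomorphic_on :: "complex set \<Rightarrow> (complex \<Rightarrow> 'a::chilbert \<Rightarrow> 'a) \<Rightarrow> bool" where
  "op_holomorphic_on S R \<longleftrightarrow> open S \<and> (\<forall>z\<in>S. bounded_op (R z) \<and> (\<exists>D. bounded_op D \<and>
     ((\<lambda>w. onorm (\<lambda>u. scaleC (1 / (w - z)) (R w u - R z u) - D u)) \<longlongrightarrow> 0) (at z)))"

definition rel_shift_inv :: "('a::chilbert \<times> 'a) set \<Rightarrow> complex \<Rightarrow> ('a \<times> 'a) set" where
  "rel_shift_inv T \<mu> = {(h' + scaleC \<mu> h, h) | h h'. (h, h') \<in> T}"

definition nevanlinna_family :: "(complex \<Rightarrow> ('k::chilbert \<times> 'k) set) \<Rightarrow> bool" where
  "nevanlinna_family M \<longleftrightarrow>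
     (\<forall>z. Im z > 0 \<longrightarrow> max_dissipative (M z)) \<and>
     (\<forall>z. Im z < 0 \<longrightarrow> max_accumulative (M z)) \<and>
     (\<forall>z. Im z \<noteq> 0 \<longrightarrow> rel_adj (M z) = M (cnj z)) \<and>
     (\<exists>\<mu> R. Im \<mu> > 0 \<and> (\<forall>z. Im z > 0 \<longrightarrow> rel_shift_inv (M z) \<mu> = op_graph (R z))
        \<and> op_holomorphic_on {z. Im z > 0} R) \<and>
     (\<exists>\<mu> R. Im \<mu> < 0 \<and> (\<forall>z. Im z < 0 \<longrightarrow> rel_shift_inv (M z) \<mu> = op_graph (R z))
        \<and> op_holomorphic_on {z. Im z < 0} R)"

end

theory Submission
  imports Defs
begin

text \<open>Everything is phrased in terms of the shifted relations \<open>T + l\<close>: \<open>-l \<in> \<rho>(T)\<close> means that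
  \<open>T + l\<close> is onto with a bounded inverse. The isometry identity makes \<open>\<J>(\<Gamma>)\<close> symmetric and gives
  \<open>Im \<langle>h', h\<rangle> = Im \<lambda> \<parallel>f\<parallel>\<^sup>2\<close> for \<open>((f, \<lambda> f), (h, h')) \<in> \<Gamma>\<close>, hence inverse bounds \<open>1 / |Im l|\<close>
  off the real axis. Since \<open>M(\<lambda>)\<close> sits inside \<open>\<J>(\<Gamma>)\<close> as the pairs \<open>((f, h), (\<lambda> f, - h'))\<close>,
  solvability of \<open>\<J>(\<Gamma>) - x\<close> passes to \<open>M(x) + x\<close>, and \<open>M(x) \<subseteq> M(x)\<^sup>*\<close> plus surjectivity
  forces selfadjointness. Conversely \<open>\<J>(\<Gamma>) - x\<close> is solved by combining an element over \<open>H\<close>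
  with one over \<open>M(x)\<close>; its inverse is symmetric and everywhere defined, so bounded by
  Hellinger--Toeplitz. For (ii), a contraction argument carries surjectivity of \<open>\<J>(\<Gamma>) - l\<close> from
  \<open>x\<close> into both half-planes; orthogonality to its range yields \<open>\<Gamma>\<^sup>-\<^sup>1 = \<Gamma>\<^sup>[\<^sup>*\<^sup>]\<close>, surjectivity
  of \<open>M(\<lambda>) + \<mu>\<close> yields maximality and \<open>M(\<lambda>)\<^sup>* = M(cnj \<lambda>)\<close>, and the resolvent identity
  \<open>R(w) - R(z) = (w - z) X(w) \<gamma>(z)\<close> with \<open>X\<close> locally Lipschitz yields holomorphy.\<close>

interpretation chilbert_module: module "scaleC :: complex \<Rightarrow> 'a::chilbert \<Rightarrow> 'a"
  by standard (simp_all add: scaleC_add_right scaleC_add_left scaleC_scaleC scaleC_one)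

lemma scaleC_minus_right: "c *\<^sub>C (- x) = - (c *\<^sub>C (x::'a::chilbert))"
  by (rule chilbert_module.scale_minus_right)

lemma scaleC_minus_left: "(- c) *\<^sub>C x = - (c *\<^sub>C (x::'a::chilbert))"
  by (rule chilbert_module.scale_minus_left)

lemma scaleC_diff_right: "c *\<^sub>C (x - y) = c *\<^sub>C x - c *\<^sub>C (y::'a::chilbert)"
  by (rule chilbert_module.scale_right_diff_distrib)

lemma scaleC_diff_left: "(a - b) *\<^sub>C x = a *\<^sub>C x - b *\<^sub>C (x::'a::chilbert)"
  by (rule chilbert_module.scale_left_diff_distrib)

lemma scaleC_Pair [simp]: "c *\<^sub>C (a, b) = (c *\<^sub>C a, c *\<^sub>C b)"
  by (simp add: scaleC_prod_def)

lemma cinner_Pair [simp]: "cinner (a, b) (c, d) = cinner a c + cinner b d"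
  by (simp add: cinner_prod_def)

lemma cinner_zero_left [simp]: "cinner 0 y = 0"
  using cinner_add_left[of "0::'a::chilbert" 0 y] by simp

lemma cinner_zero_right [simp]: "cinner x (0::'a::chilbert) = 0"
  by (simp add: cinner_commute[of x 0])

lemma cinner_add_right: "cinner x (y + z) = cinner x y + cinner x (z::'a::chilbert)"
  by (simp add: cinner_commute[of x] cinner_add_left)

lemma cinner_scaleC_right: "cinner x (c *\<^sub>C y) = cnj c * cinner x (y::'a::chilbert)"
  by (simp add: cinner_commute[of x] cinner_scaleC_left)

lemma cinner_minus_left: "cinner (- x) y = - cinner x (y::'a::chilbert)"
  using cinner_add_left[of "- x" x y] by (simp add: eq_neg_iff_add_eq_0)

lemma cinner_minus_right: "cinner x (- y) = - cinner x (y::'a::chilbert)"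
  by (simp add: cinner_commute[of x] cinner_minus_left)

lemma cinner_diff_left: "cinner (x - y) z = cinner x z - cinner y (z::'a::chilbert)"
  using cinner_add_left[of x "- y" z] by (simp add: cinner_minus_left)

lemma cinner_diff_right: "cinner x (y - z) = cinner x y - cinner x (z::'a::chilbert)"
  using cinner_add_right[of x y "- z"] by (simp add: cinner_minus_right)

lemmas cinner_simps = cinner_add_left cinner_add_right cinner_diff_left cinner_diff_right
  cinner_minus_left cinner_minus_right cinner_scaleC_left cinner_scaleC_right

lemma cinner_self: "cinner x x = complex_of_real ((norm (x::'a::chilbert))\<^sup>2)"
  using norm_cinner[of x] cinner_self_nonneg[of x] cinner_self_real[of x]
  by (simp add: complex_eq_iff)

lemma norm_scaleC: "norm (c *\<^sub>C x) = cmod c * norm (x::'a::chilbert)"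
proof -
  have "cinner (c *\<^sub>C x) (c *\<^sub>C x) = (c * cnj c) * cinner x x"
    by (simp add: cinner_simps mult.assoc mult.left_commute)
  also have "\<dots> = complex_of_real ((cmod c * norm x)\<^sup>2)"
    by (simp add: complex_norm_square[symmetric] cinner_self power_mult_distrib)
  finally have "complex_of_real ((norm (c *\<^sub>C x))\<^sup>2) = complex_of_real ((cmod c * norm x)\<^sup>2)"
    by (simp only: cinner_self)
  then have "(norm (c *\<^sub>C x))\<^sup>2 = (cmod c * norm x)\<^sup>2"
    by (simp only: of_real_eq_iff)
  then show ?thesis
    by simp
qed

lemma norm_cinner_le: "cmod (cinner x y) \<le> norm x * norm (y::'a::chilbert)"
proof (cases "y = 0")
  case False
  define t where "t = cinner x y / cinner y y"
  have yy: "cinner y y = complex_of_real ((norm y)\<^sup>2)"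
    by (rule cinner_self)
  have ny: "norm y > 0"
    using False by simp
  have "0 \<le> Re (cinner (x - t *\<^sub>C y) (x - t *\<^sub>C y))"
    by (rule cinner_self_nonneg)
  also have "cinner (x - t *\<^sub>C y) (x - t *\<^sub>C y) =
      cinner x x - cnj t * cinner x y - t * cinner y x + t * cnj t * cinner y y"
    by (simp add: cinner_simps algebra_simps)
  also have "\<dots> = cinner x x - cinner x y * cnj (cinner x y) / cinner y y"
    using ny by (simp add: t_def yy cinner_commute[of y x] field_simps)
  also have "\<dots> = complex_of_real ((norm x)\<^sup>2 - (cmod (cinner x y))\<^sup>2 / (norm y)\<^sup>2)"
    by (simp add: cinner_self yy complex_norm_square[symmetric])
  finally have "0 \<le> (norm x)\<^sup>2 - (cmod (cinner x y))\<^sup>2 / (norm y)\<^sup>2"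
    by simp
  then have "(cmod (cinner x y))\<^sup>2 \<le> (norm x)\<^sup>2 * (norm y)\<^sup>2"
    using ny by (simp add: field_simps)
  then have "(cmod (cinner x y))\<^sup>2 \<le> (norm x * norm y)\<^sup>2"
    by (simp add: power_mult_distrib)
  then show ?thesis
    by (meson norm_ge_zero power2_le_imp_le zero_le_mult_iff)
qed simp

lemma bounded_bilinear_cinner: "bounded_bilinear (cinner :: 'a::chilbert \<Rightarrow> 'a \<Rightarrow> complex)"
proof
  fix a a' b b' :: 'a and r :: real
  show "cinner (a + a') b = cinner a b + cinner a' b"
    by (rule cinner_add_left)
  show "cinner a (b + b') = cinner a b + cinner a b'"
    by (rule cinner_add_right)
  show "cinner (scaleR r a) b = scaleR r (cinner a b)"
    by (simp add: scaleC_of_real[symmetric] cinner_scaleC_left scaleR_conv_of_real)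
  show "cinner a (scaleR r b) = scaleR r (cinner a b)"
    by (simp add: scaleC_of_real[symmetric] cinner_scaleC_right scaleR_conv_of_real)
  show "\<exists>K. \<forall>a b. norm (cinner a b) \<le> norm a * norm b * K"
    by (rule exI[of _ 1]) (simp add: norm_cinner_le)
qed

lemma eq_0_if_cinner_zero: "(\<And>u. cinner u x = 0) \<Longrightarrow> x = (0::'a::chilbert)"
  using cinner_self[of x] by (metis norm_eq_zero of_real_eq_0_iff zero_eq_power2)

lemma csubspace_zero: "csubspace S \<Longrightarrow> 0 \<in> S"
  by (simp add: csubspace_def)

lemma csubspace_add: "csubspace S \<Longrightarrow> x \<in> S \<Longrightarrow> y \<in> S \<Longrightarrow> x + y \<in> S"
  by (simp add: csubspace_def)

lemma csubspace_scaleC: "csubspace S \<Longrightarrow> x \<in> S \<Longrightarrow> c *\<^sub>C x \<in> S"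
  by (simp add: csubspace_def)

lemma csubspace_diff: "csubspace S \<Longrightarrow> x \<in> S \<Longrightarrow> y \<in> S \<Longrightarrow> x - y \<in> S"
  using csubspace_add[of S x "(- 1) *\<^sub>C y"] csubspace_scaleC[of S y "- 1"]
  by (simp add: scaleC_minus_left)

lemma clinear_opD:
  assumes "clinear_op F"
  shows clinear_op_add: "F (x + y) = F x + F y"
    and clinear_op_scaleC: "F (c *\<^sub>C x) = c *\<^sub>C F x"
    and clinear_op_zero: "F 0 = 0"
    and clinear_op_diff: "F (x - y) = F x - F y"
  using assms unfolding clinear_op_def
  by (blast, blast, metis chilbert_module.scale_zero_left, metis add_diff_cancel diff_add_cancel)

lemma clinear_op_compose: "clinear_op F \<Longrightarrow> clinear_op G \<Longrightarrow> clinear_op (\<lambda>u. F (G u))"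
  unfolding clinear_op_def by simp

lemma clinear_op_compose_diff: "clinear_op F \<Longrightarrow> clinear_op G \<Longrightarrow> clinear_op (\<lambda>u. F u - G u)"
  unfolding clinear_op_def by (simp add: algebra_simps scaleC_diff_right)

lemma clinear_op_compose_scaleC: "clinear_op F \<Longrightarrow> clinear_op (\<lambda>u. c *\<^sub>C F u)"
  unfolding clinear_op_def by (simp add: scaleC_add_right mult.commute)

section \<open>Inverting shifted linear relations\<close>

definition op_bound :: "('a::real_normed_vector \<Rightarrow> 'b::real_normed_vector) \<Rightarrow> real \<Rightarrow> bool" where
  "op_bound F K \<longleftrightarrow> (\<forall>u. norm (F u) \<le> K * norm u)"

text \<open>The following describe the relation \<open>T + l\<close>; \<open>shift_solve T l\<close> is a choice of inverse
  image and becomes the operator \<open>(T + l)\<^sup>-\<^sup>1\<close> once \<open>T + l\<close> is onto and injective.\<close>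

definition shift_surj :: "('a::chilbert \<times> 'a) set \<Rightarrow> complex \<Rightarrow> bool" where
  "shift_surj T l \<longleftrightarrow> (\<forall>u. \<exists>f f'. (f, f') \<in> T \<and> f' + l *\<^sub>C f = u)"

definition shift_inj :: "('a::chilbert \<times> 'a) set \<Rightarrow> complex \<Rightarrow> bool" where
  "shift_inj T l \<longleftrightarrow> (\<forall>f f'. (f, f') \<in> T \<longrightarrow> f' + l *\<^sub>C f = 0 \<longrightarrow> f = 0)"

definition shift_lower_bound :: "('a::chilbert \<times> 'a) set \<Rightarrow> complex \<Rightarrow> real \<Rightarrow> bool" where
  "shift_lower_bound T l c \<longleftrightarrow> (\<forall>f f'. (f, f') \<in> T \<longrightarrow> norm f \<le> c * norm (f' + l *\<^sub>C f))"

definition shift_solve :: "('a::chilbert \<times> 'a) set \<Rightarrow> complex \<Rightarrow> 'a \<Rightarrow> 'a" where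
  "shift_solve T l u = (SOME f. \<exists>f'. (f, f') \<in> T \<and> f' + l *\<^sub>C f = u)"

lemma shift_inj_if_lower_bound: "shift_lower_bound T l c \<Longrightarrow> shift_inj T l"
  unfolding shift_inj_def shift_lower_bound_def by (metis norm_le_zero_iff mult_zero_right norm_zero)

lemma shift_lower_bound_mono: "shift_lower_bound T l c \<Longrightarrow> c \<le> d \<Longrightarrow> shift_lower_bound T l d"
  unfolding shift_lower_bound_def by (meson mult_right_mono norm_ge_zero order_trans)

lemma shift_solve_in:
  assumes "shift_surj T l"
  obtains f' where "(shift_solve T l u, f') \<in> T" "f' + l *\<^sub>C shift_solve T l u = u"
proof -
  have "\<exists>f f'. (f, f') \<in> T \<and> f' + l *\<^sub>C f = u"
    using assms unfolding shift_surj_def by blast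
  then have "\<exists>f'. (shift_solve T l u, f') \<in> T \<and> f' + l *\<^sub>C shift_solve T l u = u"
    unfolding shift_solve_def by (rule someI_ex)
  then show ?thesis
    using that by blast
qed

lemma shift_solve_eqI:
  assumes T: "csubspace T" and s: "shift_surj T l" and i: "shift_inj T l"
    and f: "(f, f') \<in> T" "f' + l *\<^sub>C f = u"
  shows "shift_solve T l u = f"
proof -
  obtain g' where g: "(shift_solve T l u, g') \<in> T" "g' + l *\<^sub>C shift_solve T l u = u"
    using shift_solve_in[OF s] .
  have "(shift_solve T l u - f, g' - f') \<in> T"
    using csubspace_diff[OF T g(1) f(1)] by simp
  moreover have "(g' - f') + l *\<^sub>C (shift_solve T l u - f) = 0"
    using f(2) g(2) by (simp add: scaleC_diff_right algebra_simps)
  ultimately show ?thesis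
    using i unfolding shift_inj_def by fastforce
qed

lemma clinear_shift_solve:
  assumes T: "csubspace T" and s: "shift_surj T l" and i: "shift_inj T l"
  shows "clinear_op (shift_solve T l)"
  unfolding clinear_op_def
proof (intro conjI allI)
  fix u v
  obtain f' g' where f: "(shift_solve T l u, f') \<in> T" "f' + l *\<^sub>C shift_solve T l u = u"
    and g: "(shift_solve T l v, g') \<in> T" "g' + l *\<^sub>C shift_solve T l v = v"
    using shift_solve_in[OF s] by metis
  have "(shift_solve T l u + shift_solve T l v, f' + g') \<in> T"
    using csubspace_add[OF T f(1) g(1)] by simp
  moreover have "(f' + g') + l *\<^sub>C (shift_solve T l u + shift_solve T l v)
      = (f' + l *\<^sub>C shift_solve T l u) + (g' + l *\<^sub>C shift_solve T l v)"
    by (simp add: algebra_simps)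
  then have "(f' + g') + l *\<^sub>C (shift_solve T l u + shift_solve T l v) = u + v"
    using f(2) g(2) by simp
  ultimately show "shift_solve T l (u + v) = shift_solve T l u + shift_solve T l v"
    by (rule shift_solve_eqI[OF T s i])
next
  fix a u
  obtain f' where f: "(shift_solve T l u, f') \<in> T" "f' + l *\<^sub>C shift_solve T l u = u"
    using shift_solve_in[OF s] .
  have "(a *\<^sub>C shift_solve T l u, a *\<^sub>C f') \<in> T"
    using csubspace_scaleC[OF T f(1)] by simp
  moreover have "a *\<^sub>C f' + l *\<^sub>C (a *\<^sub>C shift_solve T l u) = a *\<^sub>C u"
    using f(2) by (metis chilbert_module.scale_right_distrib scaleC_scaleC mult.commute)
  ultimately show "shift_solve T l (a *\<^sub>C u) = a *\<^sub>C shift_solve T l u"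
    by (rule shift_solve_eqI[OF T s i])
qed

lemma op_bound_shift_solve:
  assumes "shift_surj T l" and "shift_lower_bound T l c"
  shows "op_bound (shift_solve T l) c"
  unfolding op_bound_def
proof
  fix u
  obtain f' where "(shift_solve T l u, f') \<in> T" "f' + l *\<^sub>C shift_solve T l u = u"
    using shift_solve_in[OF assms(1)] .
  then show "norm (shift_solve T l u) \<le> c * norm u"
    using assms(2) unfolding shift_lower_bound_def by metis
qed

lemma bounded_opI: "clinear_op B \<Longrightarrow> op_bound B K \<Longrightarrow> bounded_op B"
  unfolding bounded_op_def op_bound_def by blast

lemma bounded_op_shift_solve:
  assumes "csubspace T" "shift_surj T l" "shift_lower_bound T l c"
  shows "bounded_op (shift_solve T l)"
  using assms by (intro bounded_opI clinear_shift_solve op_bound_shift_solve shift_inj_if_lower_bound)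

lemma rel_shift_inv_eq_graph:
  assumes T: "csubspace T" and s: "shift_surj T l" and i: "shift_inj T l"
  shows "rel_shift_inv T l = op_graph (shift_solve T l)"
proof (intro set_eqI iffI)
  fix p assume "p \<in> rel_shift_inv T l"
  then show "p \<in> op_graph (shift_solve T l)"
    unfolding rel_shift_inv_def op_graph_def using shift_solve_eqI[OF T s i] by auto
next
  fix p assume "p \<in> op_graph (shift_solve T l)"
  then obtain u where p: "p = (u, shift_solve T l u)"
    unfolding op_graph_def by blast
  obtain f' where "(shift_solve T l u, f') \<in> T" "f' + l *\<^sub>C shift_solve T l u = u"
    using shift_solve_in[OF s] .
  then show "p \<in> rel_shift_inv T l"
    unfolding rel_shift_inv_def p by force
qed

lemma shift_surj_lower_bound_if_graph:
  assumes "rel_shift_inv T l = op_graph B" "bounded_op B"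
  shows "shift_surj T l" "\<exists>c. shift_lower_bound T l c"
proof -
  have B: "B (f' + l *\<^sub>C f) = f" if "(f, f') \<in> T" for f f'
  proof -
    have "(f' + l *\<^sub>C f, f) \<in> op_graph B"
      using that assms(1) unfolding rel_shift_inv_def by blast
    then show ?thesis
      unfolding op_graph_def by simp
  qed
  show "shift_surj T l"
    unfolding shift_surj_def
  proof
    fix u
    have "(u, B u) \<in> rel_shift_inv T l"
      using assms(1) unfolding op_graph_def by blast
    then show "\<exists>f f'. (f, f') \<in> T \<and> f' + l *\<^sub>C f = u"
      unfolding rel_shift_inv_def by blast
  qed
  obtain C where "\<forall>u. norm (B u) \<le> C * norm u"
    using assms(2) unfolding bounded_op_def by blast
  then show "\<exists>c. shift_lower_bound T l c"
    unfolding shift_lower_bound_def using B by metis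
qed

lemma rel_resolvent_set_eq_shift:
  "z \<in> rel_resolvent_set T \<longleftrightarrow> (\<exists>B. bounded_op B \<and> rel_shift_inv T (- z) = op_graph B)"
proof -
  have "{(f' - z *\<^sub>C f, f) | f f'. (f, f') \<in> T} = rel_shift_inv T (- z)"
    unfolding rel_shift_inv_def by (simp add: scaleC_minus_left)
  then show ?thesis
    unfolding rel_resolvent_set_def by simp
qed

lemma shift_surj_if_resolvent: "z \<in> rel_resolvent_set T \<Longrightarrow> shift_surj T (- z)"
  using rel_resolvent_set_eq_shift shift_surj_lower_bound_if_graph(1) by blast

lemma rel_resolvent_set_iff:
  assumes "csubspace T"
  shows "z \<in> rel_resolvent_set T \<longleftrightarrow> shift_surj T (- z) \<and> (\<exists>c. shift_lower_bound T (- z) c)"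
  using rel_resolvent_set_eq_shift shift_surj_lower_bound_if_graph assms
  by (metis bounded_op_shift_solve rel_shift_inv_eq_graph shift_inj_if_lower_bound)

section \<open>Surjectivity in a half-plane\<close>

text \<open>If \<open>Im \<langle>f', f\<rangle>\<close> has the sign of \<open>Im l\<close> on \<open>T\<close>, then
  \<open>|Im l| \<parallel>f\<parallel>\<^sup>2 \<le> |Im \<langle>f' + l f, f\<rangle>| \<le> \<parallel>f' + l f\<parallel> \<parallel>f\<parallel>\<close>.\<close>

lemma shift_lower_bound_Im:
  assumes l: "Im l \<noteq> 0" and sign: "\<And>f f'. (f, f') \<in> T \<Longrightarrow> 0 \<le> Im (cinner f' f) * Im l"
  shows "shift_lower_bound T l (1 / \<bar>Im l\<bar>)"
  unfolding shift_lower_bound_def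
proof (intro allI impI)
  fix f f' assume ff: "(f, f') \<in> T"
  have "Im (cinner (f' + l *\<^sub>C f) f) = Im (cinner f' f) + Im l * (norm f)\<^sup>2"
    by (simp add: cinner_simps cinner_self)
  then have "\<bar>Im l\<bar> * (norm f)\<^sup>2 \<le> \<bar>Im (cinner (f' + l *\<^sub>C f) f)\<bar>"
    using sign[OF ff] l by (cases "Im l > 0") (simp_all add: zero_le_mult_iff)
  also have "\<dots> \<le> norm (f' + l *\<^sub>C f) * norm f"
    using abs_Im_le_cmod norm_cinner_le order_trans by blast
  finally have "\<bar>Im l\<bar> * norm f * norm f \<le> norm (f' + l *\<^sub>C f) * norm f"
    by (simp add: power2_eq_square mult_ac)
  then have "\<bar>Im l\<bar> * norm f \<le> norm (f' + l *\<^sub>C f)"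
    by (cases "f = 0") auto
  then show "norm f \<le> 1 / \<bar>Im l\<bar> * norm (f' + l *\<^sub>C f)"
    using l by (simp add: field_simps)
qed

text \<open>Surjectivity of \<open>T + l\<close> survives perturbations of \<open>l\<close> smaller than the inverse
  bound: \<open>f = (T + l)\<^sup>-\<^sup>1 (u - (l' - l) f)\<close> is a contraction fixed point.\<close>

lemma shift_surj_perturb:
  assumes T: "csubspace T" and s: "shift_surj T l" and lb: "shift_lower_bound T l c"
    and c: "0 \<le> c" and small: "cmod (l' - l) * c < 1"
  shows "shift_surj T l'"
  unfolding shift_surj_def
proof
  fix u
  define R where "R = shift_solve T l"
  have lin: "clinear_op R"
    unfolding R_def using T s lb by (intro clinear_shift_solve shift_inj_if_lower_bound)
  have bound: "op_bound R c"
    unfolding R_def using s lb by (rule op_bound_shift_solve)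
  define \<Phi> where "\<Phi> h = R (u - (l' - l) *\<^sub>C h)" for h
  have "\<exists>!h. \<Phi> h = h"
  proof (rule banach_fix_type[of "cmod (l' - l) * c"])
    show "0 \<le> cmod (l' - l) * c" "cmod (l' - l) * c < 1"
      using c small by simp_all
    show "\<forall>x y. dist (\<Phi> x) (\<Phi> y) \<le> cmod (l' - l) * c * dist x y"
    proof (intro allI)
      fix x y
      have "\<Phi> x - \<Phi> y = R ((l' - l) *\<^sub>C (y - x))"
        unfolding \<Phi>_def clinear_op_diff[OF lin, symmetric] by (simp add: scaleC_diff_right)
      then show "dist (\<Phi> x) (\<Phi> y) \<le> cmod (l' - l) * c * dist x y"
        using bound unfolding op_bound_def dist_norm
        by (metis mult.commute mult.left_commute norm_minus_commute norm_scaleC)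
    qed
  qed
  then obtain h where h: "R (u - (l' - l) *\<^sub>C h) = h"
    unfolding \<Phi>_def by blast
  obtain h' where h': "(h, h') \<in> T" "h' + l *\<^sub>C h = u - (l' - l) *\<^sub>C h"
    using shift_solve_in[OF s, of "u - (l' - l) *\<^sub>C h"] h unfolding R_def by metis
  have "h' + l' *\<^sub>C h = u"
    using h'(2) by (simp add: algebra_simps)
  then show "\<exists>f f'. (f, f') \<in> T \<and> f' + l' *\<^sub>C f = u"
    using h'(1) by blast
qed

lemma Im_segment_bound:
  assumes ab: "Im a * Im b > 0" and t: "0 \<le> t" "t \<le> 1"
  defines "w \<equiv> a + complex_of_real t * (b - a)"
  shows "min \<bar>Im a\<bar> \<bar>Im b\<bar> \<le> \<bar>Im w\<bar>" and "Im w * Im a > 0"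
proof -
  have Im_w: "Im w = (1 - t) * Im a + t * Im b"
    by (simp add: w_def algebra_simps)
  consider "Im a > 0" "Im b > 0" | "Im a < 0" "Im b < 0"
    using ab by (auto simp: zero_less_mult_iff)
  then have "min \<bar>Im a\<bar> \<bar>Im b\<bar> \<le> \<bar>Im w\<bar> \<and> Im w * Im a > 0"
  proof cases
    case 1
    have "(1 - t) * min (Im a) (Im b) + t * min (Im a) (Im b) \<le> Im w"
      unfolding Im_w using t by (intro add_mono mult_left_mono) auto
    then show ?thesis
      using 1 by (simp add: algebra_simps)
  next
    case 2
    have "Im w \<le> (1 - t) * max (Im a) (Im b) + t * max (Im a) (Im b)"
      unfolding Im_w using t by (intro add_mono mult_left_mono) auto
    then show ?thesis
      using 2 by (simp add: algebra_simps mult_neg_neg)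
  qed
  then show "min \<bar>Im a\<bar> \<bar>Im b\<bar> \<le> \<bar>Im w\<bar>" and "Im w * Im a > 0"
    by auto
qed

text \<open>Walking from \<open>a\<close> to \<open>b\<close> in steps shorter than the uniform inverse bound
  \<open>1 / min |Im a| |Im b|\<close> of \<open>shift_lower_bound_Im\<close>.\<close>

lemma shift_surj_half_plane:
  assumes T: "csubspace T" and s: "shift_surj T a" and ab: "Im a * Im b > 0"
    and sign: "\<And>f f'. (f, f') \<in> T \<Longrightarrow> 0 \<le> Im (cinner f' f) * Im a"
  shows "shift_surj T b"
proof -
  define m where "m = min \<bar>Im a\<bar> \<bar>Im b\<bar>"
  have m: "m > 0"
    using ab unfolding m_def by (auto simp: zero_less_mult_iff)
  define w where "w t = a + complex_of_real t * (b - a)" for t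
  have lb: "shift_lower_bound T (w t) (1 / m)" if t: "0 \<le> t" "t \<le> 1" for t
  proof -
    note seg = Im_segment_bound[OF ab t, folded w_def m_def]
    have "0 \<le> Im (cinner f' f) * Im (w t)" if "(f, f') \<in> T" for f f'
    proof -
      have "0 \<le> (Im (cinner f' f) * Im a) * (Im (w t) * Im a)"
        using sign[OF that] seg(2) by simp
      then have "0 \<le> (Im (cinner f' f) * Im (w t)) * (Im a * Im a)"
        by (simp add: mult_ac)
      moreover have "Im a * Im a > 0"
        using seg(2) not_real_square_gt_zero by fastforce
      ultimately show ?thesis
        by (simp add: zero_le_mult_iff)
    qed
    then have "shift_lower_bound T (w t) (1 / \<bar>Im (w t)\<bar>)"
      using seg(2) by (intro shift_lower_bound_Im) auto
    then show ?thesis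
      by (rule shift_lower_bound_mono) (use seg m in \<open>simp add: frac_le\<close>)
  qed
  obtain N :: nat where N: "real N > cmod (b - a) / m"
    using reals_Archimedean2 by blast
  moreover have "cmod (b - a) / m \<ge> 0"
    using m by simp
  ultimately have N_pos: "N > 0"
    by (cases "N = 0") auto
  have step: "cmod (w (real (Suc k) / N) - w (real k / N)) * (1 / m) < 1" for k
  proof -
    have "w (real (Suc k) / N) - w (real k / N) = complex_of_real (1 / N) * (b - a)"
      unfolding w_def by (simp add: algebra_simps add_divide_distrib)
    then have "cmod (w (real (Suc k) / N) - w (real k / N)) = cmod (b - a) / N"
      by (simp add: norm_mult norm_divide)
    also have "\<dots> < m"
      using N N_pos m by (simp add: field_simps)
    finally show ?thesis
      using m by (simp add: field_simps)
  qed
  have "k \<le> N \<Longrightarrow> shift_surj T (w (real k / N))" for k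
  proof (induction k)
    case 0
    then show ?case
      using s by (simp add: w_def)
  next
    case (Suc k)
    have t: "0 \<le> real k / N" "real k / N \<le> 1"
      using Suc.prems by auto
    show ?case
      using Suc.prems m by (intro shift_surj_perturb[OF T Suc.IH lb[OF t] _ step]) auto
  qed
  from this[of N] show ?thesis
    using N_pos by (simp add: w_def)
qed

section \<open>Hellinger--Toeplitz\<close>

lemma Baire_closed_cover:
  fixes F :: "nat \<Rightarrow> 'a::complete_space set"
  assumes "\<And>n. closed (F n)" and "(\<Union>n. F n) = UNIV"
  shows "\<exists>n. interior (F n) \<noteq> {}"
proof (rule ccontr)
  assume "\<not> ?thesis"
  then have "euclidean interior_of (\<Union>n. F n) = {}"
    using assms(1) completely_metrizable_space_euclidean
    by (intro Baire_category_alt) auto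
  then show False
    using assms(2) by simp
qed

text \<open>Comparing \<open>\<langle>w\<^sub>0, v\<rangle>\<close> with \<open>\<langle>w\<^sub>0 + (r/2) v/\<parallel>v\<parallel>, v\<rangle>\<close>.\<close>

lemma norm_le_if_cinner_bounded_on_ball:
  fixes v w0 :: "'a::chilbert"
  assumes r: "r > 0" and bound: "\<And>w. w \<in> ball w0 r \<Longrightarrow> cmod (cinner w v) \<le> C"
  shows "r * norm v \<le> 4 * C"
proof (cases "v = 0")
  case True
  then show ?thesis
    using bound[of w0] r by simp
next
  case False
  define w where "w = w0 + scaleR (r / 2 / norm v) v"
  have "w \<in> ball w0 r" "w0 \<in> ball w0 r"
    using r False unfolding w_def by (simp_all add: dist_norm)
  then have b: "cmod (cinner w v) \<le> C" "cmod (cinner w0 v) \<le> C"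
    using bound by blast+
  have "cinner w v - cinner w0 v = complex_of_real (r / 2 * norm v)"
    using False unfolding w_def
    by (simp add: cinner_add_left scaleC_of_real[symmetric] cinner_scaleC_left cinner_self
        power2_eq_square)
  then have "cmod (cinner w v - cinner w0 v) = r / 2 * norm v"
    using r by (simp only: norm_of_real) simp
  moreover have "cmod (cinner w v - cinner w0 v) \<le> 2 * C"
    using b norm_triangle_ineq4[of "cinner w v" "cinner w0 v"] by simp
  ultimately show ?thesis
    by simp
qed

lemma op_bound_if_unit_bound:
  fixes R :: "'a::chilbert \<Rightarrow> 'b::chilbert"
  assumes lin: "clinear_op R" and unit: "\<And>u. norm u \<le> 1 \<Longrightarrow> norm (R u) \<le> K"
  shows "op_bound R K"
  unfolding op_bound_def
proof
  fix u
  show "norm (R u) \<le> K * norm u"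
  proof (cases "u = 0")
    case True
    then show ?thesis
      using clinear_op_zero[OF lin] by simp
  next
    case False
    define c where "c = complex_of_real (1 / norm u)"
    have "norm (c *\<^sub>C u) = 1"
      using False by (simp add: c_def norm_scaleC norm_divide)
    then have "norm (R (c *\<^sub>C u)) \<le> K"
      by (intro unit) simp
    then have "norm (R u) / norm u \<le> K"
      using False by (simp add: c_def clinear_op_scaleC[OF lin] norm_scaleC norm_divide)
    then show ?thesis
      using False by (simp add: field_simps)
  qed
qed

text \<open>The sets \<open>F n\<close> of \<open>w\<close> with \<open>|\<langle>w, R u\<rangle>| \<le> n\<close> on the unit ball are
  closed and, by symmetry (\<open>\<langle>w, R u\<rangle> = \<langle>R w, u\<rangle>\<close>), cover the space; Baire gives a ball inside
  one of them.\<close>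

lemma hellinger_toeplitz:
  fixes R :: "'a::chilbert \<Rightarrow> 'a"
  assumes lin: "clinear_op R" and sym: "\<And>u w. cinner (R u) w = cinner u (R w)"
  shows "\<exists>K. op_bound R K"
proof -
  define F where "F n = {w. \<forall>u. norm u \<le> 1 \<longrightarrow> cmod (cinner w (R u)) \<le> real n}" for n :: nat
  have closed: "closed (F n)" for n
  proof -
    have "F n = (\<Inter>u\<in>{u. norm u \<le> 1}. {w. cmod (cinner w (R u)) \<le> real n})"
      unfolding F_def by auto
    moreover have "continuous_on UNIV (\<lambda>w. cinner w c)" for c :: 'a
      using bounded_bilinear.bounded_linear_left[OF bounded_bilinear_cinner]
      by (intro linear_continuous_on) blast
    then have "closed {w. cmod (cinner w (R u)) \<le> real n}" for u
      by (intro closed_Collect_le continuous_on_norm continuous_on_const)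
    ultimately show ?thesis
      by auto
  qed
  have "\<exists>n. w \<in> F n" for w
  proof -
    obtain n :: nat where n: "norm (R w) \<le> real n"
      using real_arch_simple by blast
    have "cmod (cinner w (R u)) \<le> real n" if "norm u \<le> 1" for u
    proof -
      have "cmod (cinner w (R u)) = cmod (cinner (R u) w)"
        by (simp add: cinner_commute[of w "R u"])
      also have "\<dots> = cmod (cinner u (R w))"
        by (simp only: sym)
      also have "\<dots> \<le> norm u * norm (R w)"
        by (rule norm_cinner_le)
      also have "\<dots> \<le> 1 * real n"
        using that n by (intro mult_mono) auto
      finally show ?thesis
        by simp
    qed
    then show ?thesis
      unfolding F_def by blast
  qed
  then have "(\<Union>n. F n) = UNIV"
    by blast
  then obtain n where "interior (F n) \<noteq> {}"
    using Baire_closed_cover[of F, OF closed] by blast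
  then obtain w0 where "w0 \<in> interior (F n)"
    by blast
  then obtain r where r: "r > 0" "ball w0 r \<subseteq> F n"
    using mem_interior by blast
  have "r * norm (R u) \<le> 4 * real n" if "norm u \<le> 1" for u
  proof (rule norm_le_if_cinner_bounded_on_ball[OF r(1)])
    fix w assume "w \<in> ball w0 r"
    then have "w \<in> F n"
      using r(2) by blast
    then show "cmod (cinner w (R u)) \<le> real n"
      using that unfolding F_def by blast
  qed
  then have "op_bound R (4 * real n / r)"
    using r by (intro op_bound_if_unit_bound[OF lin]) (simp add: field_simps)
  then show ?thesis ..
qed

lemma isometric_relD:
  assumes "isometric_rel \<Gamma>" "((f, f'), (h, h')) \<in> \<Gamma>" "((g, g'), (k, k')) \<in> \<Gamma>"
  shows "cinner f' g - cinner f g' = cinner h' k - cinner h k'"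
  using assms unfolding isometric_rel_def by fastforce

lemma main_transform_iff: "((a, b), (a', b')) \<in> main_transform \<Gamma> \<longleftrightarrow> ((a, a'), (b, - b')) \<in> \<Gamma>"
  unfolding main_transform_def by force

lemma weyl_family_iff: "hh \<in> weyl_family \<Gamma> z \<longleftrightarrow> (\<exists>f. ((f, z *\<^sub>C f), hh) \<in> \<Gamma>)"
  unfolding weyl_family_def by simp

lemma csubspace_main_transform:
  assumes "csubspace \<Gamma>"
  shows "csubspace (main_transform \<Gamma>)"
  unfolding csubspace_def
proof (intro conjI ballI allI)
  show "0 \<in> main_transform \<Gamma>"
    using csubspace_zero[OF assms] by (simp add: zero_prod_def main_transform_iff)
next
  fix p q assume "p \<in> main_transform \<Gamma>" "q \<in> main_transform \<Gamma>"
  moreover obtain a b a' b' c d c' d' where "p = ((a, b), (a', b'))" "q = ((c, d), (c', d'))"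
    by (metis prod.exhaust)
  ultimately show "p + q \<in> main_transform \<Gamma>"
    using csubspace_add[OF assms, of "((a, a'), (b, - b'))" "((c, c'), (d, - d'))"]
    by (simp add: main_transform_iff add.commute)
next
  fix c p assume "p \<in> main_transform \<Gamma>"
  moreover obtain a b a' b' where "p = ((a, b), (a', b'))"
    by (metis prod.exhaust)
  ultimately show "c *\<^sub>C p \<in> main_transform \<Gamma>"
    using csubspace_scaleC[OF assms, of "((a, a'), (b, - b'))" c]
    by (simp add: main_transform_iff scaleC_minus_right)
qed

lemma csubspace_weyl_family:
  assumes "csubspace \<Gamma>"
  shows "csubspace (weyl_family \<Gamma> z)"
  unfolding csubspace_def
proof (intro conjI ballI allI)
  show "0 \<in> weyl_family \<Gamma> z"
    using csubspace_zero[OF assms] unfolding weyl_family_iff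
    by (intro exI[of _ 0]) (simp add: zero_prod_def)
next
  fix p q assume "p \<in> weyl_family \<Gamma> z" "q \<in> weyl_family \<Gamma> z"
  then obtain f g where "((f, z *\<^sub>C f), p) \<in> \<Gamma>" "((g, z *\<^sub>C g), q) \<in> \<Gamma>"
    unfolding weyl_family_iff by blast
  then have "((f + g, z *\<^sub>C (f + g)), p + q) \<in> \<Gamma>"
    using csubspace_add[OF assms] by (fastforce simp: scaleC_add_right)
  then show "p + q \<in> weyl_family \<Gamma> z"
    unfolding weyl_family_iff ..
next
  fix c p assume "p \<in> weyl_family \<Gamma> z"
  then obtain f where "((f, z *\<^sub>C f), p) \<in> \<Gamma>"
    unfolding weyl_family_iff by blast
  then have "((c *\<^sub>C f, z *\<^sub>C (c *\<^sub>C f)), c *\<^sub>C p) \<in> \<Gamma>"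
    using csubspace_scaleC[OF assms] by (fastforce simp: mult.commute)
  then show "c *\<^sub>C p \<in> weyl_family \<Gamma> z"
    unfolding weyl_family_iff ..
qed

lemma main_transform_subset_adj:
  assumes "isometric_rel \<Gamma>"
  shows "main_transform \<Gamma> \<subseteq> rel_adj (main_transform \<Gamma>)"
proof (clarsimp simp: rel_adj_def)
  fix f h f' h' g k g' k'
  assume "((g, k), (g', k')) \<in> main_transform \<Gamma>" "((f, h), (f', h')) \<in> main_transform \<Gamma>"
  then have "((f, f'), (h, - h')) \<in> \<Gamma>" "((g, g'), (k, - k')) \<in> \<Gamma>"
    by (simp_all add: main_transform_iff)
  from isometric_relD[OF assms this]
  show "cinner f' g + cinner h' k = cinner f g' + cinner h k'"
    by (simp add: cinner_minus_left cinner_minus_right algebra_simps)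
qed

lemma Im_cinner_eq_0_if_symmetric:
  assumes "T \<subseteq> rel_adj T" "(f, f') \<in> T"
  shows "Im (cinner f' f) = 0"
proof -
  have "cinner f' f = cinner f f'"
    using assms unfolding rel_adj_def by blast
  then show ?thesis
    by (metis cinner_commute Reals_cnj_iff complex_is_Real_iff)
qed

lemma Im_cinner_weyl_family:
  assumes "isometric_rel \<Gamma>" "((f, z *\<^sub>C f), (h, h')) \<in> \<Gamma>"
  shows "Im (cinner h' h) = Im z * (norm f)\<^sup>2"
proof -
  have "(z - cnj z) * complex_of_real ((norm f)\<^sup>2) = cinner h' h - cnj (cinner h' h)"
    using isometric_relD[OF assms(1) assms(2) assms(2)]
    by (simp add: cinner_simps cinner_self algebra_simps cinner_commute[of h h'])
  from arg_cong[OF this, of Im] show ?thesis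
    by (simp add: complex_diff_cnj)
qed

lemma weyl_family_sign:
  assumes "isometric_rel \<Gamma>" "0 \<le> Im z * Im a" "(h, h') \<in> weyl_family \<Gamma> z"
  shows "0 \<le> Im (cinner h' h) * Im a"
proof -
  obtain f where "((f, z *\<^sub>C f), (h, h')) \<in> \<Gamma>"
    using assms(3) unfolding weyl_family_iff by blast
  from Im_cinner_weyl_family[OF assms(1) this]
  have "Im (cinner h' h) * Im a = (Im z * Im a) * (norm f)\<^sup>2"
    by (simp add: mult_ac)
  then show ?thesis
    using assms(2) by (metis mult_nonneg_nonneg zero_le_power2)
qed

lemma weyl_family_cnj_subset_adj:
  assumes "isometric_rel \<Gamma>"
  shows "weyl_family \<Gamma> (cnj z) \<subseteq> rel_adj (weyl_family \<Gamma> z)"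
proof (clarsimp simp: rel_adj_def)
  fix k k' h h'
  assume "(k, k') \<in> weyl_family \<Gamma> (cnj z)" "(h, h') \<in> weyl_family \<Gamma> z"
  then obtain g f where "((f, z *\<^sub>C f), (h, h')) \<in> \<Gamma>" "((g, cnj z *\<^sub>C g), (k, k')) \<in> \<Gamma>"
    unfolding weyl_family_iff by blast
  from isometric_relD[OF assms this] show "cinner h' k = cinner h k'"
    by (simp add: cinner_simps)
qed

text \<open>If \<open>S \<subseteq> T\<^sup>*\<close> and \<open>S + cnj l\<close>, \<open>T + l\<close> are onto, then \<open>T\<^sup>* \<subseteq> S\<close>: an element of
  \<open>T\<^sup>*\<close> differs from one of \<open>S\<close> by a pair \<open>(d, - cnj l d)\<close> with \<open>d \<perp> ran (T + l)\<close>.\<close>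

lemma rel_adj_subset_if_shift_surj:
  assumes ST: "S \<subseteq> rel_adj T" and sS: "shift_surj S (cnj l)" and sT: "shift_surj T l"
  shows "rel_adj T \<subseteq> S"
proof clarify
  fix k k' assume p: "(k, k') \<in> rel_adj T"
  obtain m m' where m: "(m, m') \<in> S" "m' + cnj l *\<^sub>C m = k' + cnj l *\<^sub>C k"
    using sS unfolding shift_surj_def by metis
  define d where "d = k - m"
  have d': "k' - m' = - (cnj l *\<^sub>C d)"
    using m(2) unfolding d_def by (simp add: scaleC_diff_right algebra_simps)
  have "cinner u d = 0" for u
  proof -
    obtain h h' where h: "(h, h') \<in> T" "h' + l *\<^sub>C h = u"
      using sT unfolding shift_surj_def by blast
    have "cinner h' k = cinner h k'" "cinner h' m = cinner h m'"
      using p ST m(1) h(1) unfolding rel_adj_def by blast+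
    then have "cinner h' d = cinner h (k' - m')"
      unfolding d_def by (simp add: cinner_simps)
    then show ?thesis
      using h(2) by (auto simp: d' cinner_simps)
  qed
  then have "d = 0"
    by (rule eq_0_if_cinner_zero)
  then show "(k, k') \<in> S"
    using d' m(1) unfolding d_def by simp
qed

lemma subset_if_shift_surj_sign:
  assumes S: "csubspace S" and TS: "T \<subseteq> S" and sT: "shift_surj T \<mu>" and \<mu>: "Im \<mu> \<noteq> 0"
    and sign: "\<And>f f'. (f, f') \<in> S \<Longrightarrow> 0 \<le> Im (cinner f' f) * Im \<mu>"
  shows "S \<subseteq> T"
proof clarify
  fix h h' assume p: "(h, h') \<in> S"
  obtain k k' where k: "(k, k') \<in> T" "k' + \<mu> *\<^sub>C k = h' + \<mu> *\<^sub>C h"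
    using sT unfolding shift_surj_def by metis
  define d where "d = h - k"
  have d': "h' - k' = - (\<mu> *\<^sub>C d)"
    using k(2) unfolding d_def by (simp add: scaleC_diff_right algebra_simps)
  have "(d, h' - k') \<in> S"
    using csubspace_diff[OF S p, of "(k, k')"] k(1) TS unfolding d_def by auto
  from sign[OF this] have "(Im \<mu> * Im \<mu>) * (norm d)\<^sup>2 \<le> 0"
    unfolding d' by (simp add: cinner_simps cinner_self mult_ac)
  moreover have "Im \<mu> * Im \<mu> > 0"
    using \<mu> not_real_square_gt_zero by blast
  ultimately have "d = 0"
    by (auto simp: mult_le_0_iff)
  then show "(h, h') \<in> T"
    using d' k(1) unfolding d_def by simp
qed

section \<open>The equivalence at a real regular point\<close>

lemma rel_plus_scalar_iff: "(f, g) \<in> rel_plus_scalar T c \<longleftrightarrow> (f, g - c *\<^sub>C f) \<in> T"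
  unfolding rel_plus_scalar_def by force

lemma csubspace_rel_plus_scalar:
  assumes "csubspace T"
  shows "csubspace (rel_plus_scalar T c)"
  unfolding csubspace_def
proof (intro conjI ballI allI)
  show "0 \<in> rel_plus_scalar T c"
    using csubspace_zero[OF assms] by (simp add: rel_plus_scalar_iff zero_prod_def)
next
  fix p q assume "p \<in> rel_plus_scalar T c" "q \<in> rel_plus_scalar T c"
  moreover obtain f g f' g' where "p = (f, f')" "q = (g, g')"
    by fastforce
  ultimately show "p + q \<in> rel_plus_scalar T c"
    using csubspace_add[OF assms, of "(f, f' - c *\<^sub>C f)" "(g, g' - c *\<^sub>C g)"]
    by (simp add: rel_plus_scalar_iff algebra_simps)
next
  fix a p assume "p \<in> rel_plus_scalar T c"
  moreover obtain f f' where "p = (f, f')"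
    by fastforce
  ultimately show "a *\<^sub>C p \<in> rel_plus_scalar T c"
    using csubspace_scaleC[OF assms, of "(f, f' - c *\<^sub>C f)" a]
    by (simp add: rel_plus_scalar_iff scaleC_diff_right mult.commute)
qed

lemma shift_rel_plus_scalar: "g + l *\<^sub>C f = (g - c *\<^sub>C f) + (c + l) *\<^sub>C f"
  by (simp add: scaleC_add_left)

lemma shift_surj_rel_plus_scalar: "shift_surj (rel_plus_scalar T c) l \<longleftrightarrow> shift_surj T (c + l)"
  unfolding shift_surj_def rel_plus_scalar_iff shift_rel_plus_scalar[of _ l _ c]
  by (metis add_diff_cancel)

lemma shift_lower_bound_rel_plus_scalar:
  "shift_lower_bound (rel_plus_scalar T c) l b \<longleftrightarrow> shift_lower_bound T (c + l) b"
  unfolding shift_lower_bound_def rel_plus_scalar_iff shift_rel_plus_scalar[of _ l _ c]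
  by (metis add_diff_cancel)

lemma weyl_family_shift_main_transform:
  assumes "((f, z *\<^sub>C f), (h, h')) \<in> \<Gamma>"
  shows "((f, h), (z *\<^sub>C f, - h')) \<in> main_transform \<Gamma>"
    and "(z *\<^sub>C f, - h') + (- z) *\<^sub>C (f, h) = (0, - (h' + z *\<^sub>C h))"
  using assms by (simp_all add: main_transform_iff scaleC_minus_left)

lemma shift_surj_weyl_family:
  assumes "shift_surj (main_transform \<Gamma>) (- z)"
  shows "shift_surj (weyl_family \<Gamma> z) z"
  unfolding shift_surj_def
proof
  fix v
  obtain f h f' k where "((f, h), (f', k)) \<in> main_transform \<Gamma>" "(f', k) + (- z) *\<^sub>C (f, h) = (0, - v)"
    using assms unfolding shift_surj_def by (metis prod.exhaust)
  then have "((f, z *\<^sub>C f), (h, - k)) \<in> \<Gamma>" "- k + z *\<^sub>C h = v"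
    by (auto simp: main_transform_iff scaleC_minus_left algebra_simps)
  then show "\<exists>h h'. (h, h') \<in> weyl_family \<Gamma> z \<and> h' + z *\<^sub>C h = v"
    unfolding weyl_family_iff by blast
qed

lemma shift_lower_bound_weyl_family:
  fixes \<Gamma> :: "(('h::chilbert \<times> 'h) \<times> ('k::chilbert \<times> 'k)) set"
  assumes "shift_lower_bound (main_transform \<Gamma>) (- z) c"
  shows "shift_lower_bound (weyl_family \<Gamma> z) z c"
  unfolding shift_lower_bound_def
proof (intro allI impI)
  fix h h' assume "(h, h') \<in> weyl_family \<Gamma> z"
  then obtain f where "((f, z *\<^sub>C f), (h, h')) \<in> \<Gamma>"
    unfolding weyl_family_iff by blast
  have "norm h \<le> norm (f, h)"
    by (rule norm_snd_le)
  also have "\<dots> \<le> c * norm (0::'h, - (h' + z *\<^sub>C h))"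
    using assms weyl_family_shift_main_transform[OF \<open>((f, z *\<^sub>C f), (h, h')) \<in> \<Gamma>\<close>]
    unfolding shift_lower_bound_def by metis
  also have "norm (0::'h, - (h' + z *\<^sub>C h)) = norm (h' + z *\<^sub>C h)"
    by (simp only: norm_Pair1 norm_minus_cancel)
  finally show "norm h \<le> c * norm (h' + z *\<^sub>C h)" .
qed

lemma weyl_family_resolvent_if_transform_resolvent:
  assumes I: "isometric_rel \<Gamma>"
    and r: "complex_of_real x \<in> rel_resolvent_set (main_transform \<Gamma>)"
  shows "selfadjoint_rel (weyl_family \<Gamma> (complex_of_real x))"
    and "0 \<in> rel_resolvent_set (rel_plus_scalar (weyl_family \<Gamma> (complex_of_real x)) (complex_of_real x))"
proof -
  let ?M = "weyl_family \<Gamma> (complex_of_real x)"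
  have \<Gamma>: "csubspace \<Gamma>"
    using I unfolding isometric_rel_def by blast
  obtain c where s: "shift_surj (main_transform \<Gamma>) (- complex_of_real x)"
    and lb: "shift_lower_bound (main_transform \<Gamma>) (- complex_of_real x) c"
    using r rel_resolvent_set_iff[OF csubspace_main_transform[OF \<Gamma>]] by blast
  have M_surj: "shift_surj ?M (complex_of_real x)"
    by (rule shift_surj_weyl_family[OF s])
  have "?M \<subseteq> rel_adj ?M"
    using weyl_family_cnj_subset_adj[OF I, of "complex_of_real x"] by simp
  moreover from this have "rel_adj ?M \<subseteq> ?M"
    using M_surj by (intro rel_adj_subset_if_shift_surj) simp_all
  ultimately show "selfadjoint_rel ?M"
    unfolding selfadjoint_rel_def by blast
  show "0 \<in> rel_resolvent_set (rel_plus_scalar ?M (complex_of_real x))"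
    using M_surj shift_lower_bound_weyl_family[OF lb]
    unfolding rel_resolvent_set_iff[OF csubspace_rel_plus_scalar[OF csubspace_weyl_family[OF \<Gamma>]]]
      shift_surj_rel_plus_scalar shift_lower_bound_rel_plus_scalar
    by auto
qed

text \<open>Solve \<open>\<J>(\<Gamma>) - z\<close> by an element over \<open>H\<close> (taking care of the first component) corrected
  by one over \<open>M(z)\<close> (taking care of the second).\<close>

lemma shift_surj_main_transform:
  fixes \<Gamma> :: "(('h::chilbert \<times> 'h) \<times> ('k::chilbert \<times> 'k)) set"
  assumes \<Gamma>: "csubspace \<Gamma>" and HD: "H \<subseteq> Domain \<Gamma>"
    and sH: "shift_surj H (- z)" and sM: "shift_surj (weyl_family \<Gamma> z) z"
  shows "shift_surj (main_transform \<Gamma>) (- z)"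
  unfolding shift_surj_def
proof
  fix y :: "'h \<times> 'k"
  obtain u v where y: "y = (u, v)"
    by fastforce
  obtain f0 f0' where f0: "(f0, f0') \<in> H" "f0' + (- z) *\<^sub>C f0 = u"
    using sH unfolding shift_surj_def by blast
  then obtain h0 h0' where G0: "((f0, f0'), (h0, h0')) \<in> \<Gamma>"
    using HD by fastforce
  obtain k k' where "(k, k') \<in> weyl_family \<Gamma> z" and k: "k' + z *\<^sub>C k = - v - (h0' + z *\<^sub>C h0)"
    using sM unfolding shift_surj_def by blast
  then obtain g where G1: "((g, z *\<^sub>C g), (k, k')) \<in> \<Gamma>"
    unfolding weyl_family_iff by blast
  have "((f0 + g, f0' + z *\<^sub>C g), (h0 + k, h0' + k')) \<in> \<Gamma>"
    using csubspace_add[OF \<Gamma> G0 G1] by simp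
  then have "((f0 + g, h0 + k), (f0' + z *\<^sub>C g, - (h0' + k'))) \<in> main_transform \<Gamma>"
    unfolding main_transform_iff minus_minus .
  moreover have "(f0' + z *\<^sub>C g, - (h0' + k')) + (- z) *\<^sub>C (f0 + g, h0 + k) = y"
  proof -
    have "- (h0' + k') + (- z) *\<^sub>C (h0 + k) = - ((k' + z *\<^sub>C k) + (h0' + z *\<^sub>C h0))"
      by (simp add: scaleC_minus_left algebra_simps)
    then show ?thesis
      using f0(2) k by (simp add: y scaleC_minus_left algebra_simps)
  qed
  ultimately show "\<exists>f f'. (f, f') \<in> main_transform \<Gamma> \<and> f' + (- z) *\<^sub>C f = y"
    by blast
qed

text \<open>A kernel element of \<open>\<J>(\<Gamma>) - z\<close> yields \<open>((f, z f), (0, 0)) \<in> \<Gamma>\<close>, and then the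
  isometry identity against \<open>\<Gamma>\<close> over \<open>H\<close> shows \<open>f \<perp> ran (H - cnj z)\<close>.\<close>

lemma shift_inj_main_transform:
  assumes I: "isometric_rel \<Gamma>" and HD: "H \<subseteq> Domain \<Gamma>"
    and sH: "shift_surj H (- cnj z)" and iM: "shift_inj (weyl_family \<Gamma> z) z"
  shows "shift_inj (main_transform \<Gamma>) (- z)"
  unfolding shift_inj_def
proof (intro allI impI)
  fix a a' assume a: "(a, a') \<in> main_transform \<Gamma>" "a' + (- z) *\<^sub>C a = 0"
  obtain f h f' h' where a_eq: "a = (f, h)" "a' = (f', h')"
    by fastforce
  have f': "f' = z *\<^sub>C f" and h': "h' = z *\<^sub>C h"
    using a(2) by (simp_all add: a_eq scaleC_minus_left zero_prod_def)
  have G: "((f, z *\<^sub>C f), (h, - h')) \<in> \<Gamma>"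
    using a(1) by (simp add: a_eq f' main_transform_iff)
  then have "h = 0"
    using iM unfolding shift_inj_def weyl_family_iff by (metis h' add.left_inverse)
  with G h' have G0: "((f, z *\<^sub>C f), (0, 0)) \<in> \<Gamma>"
    by simp
  have "cinner u f = 0" for u
  proof -
    obtain g g' where g: "(g, g') \<in> H" "g' + (- cnj z) *\<^sub>C g = u"
      using sH unfolding shift_surj_def by blast
    then obtain k k' where "((g, g'), (k, k')) \<in> \<Gamma>"
      using HD by fastforce
    from isometric_relD[OF I G0 this] have "cinner f (g' + (- cnj z) *\<^sub>C g) = 0"
      by (simp add: cinner_simps scaleC_minus_left)
    then show ?thesis
      using g(2) cinner_commute[of f u] by simp
  qed
  then have "f = 0"
    by (rule eq_0_if_cinner_zero)
  then show "a = 0"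
    using \<open>h = 0\<close> by (simp add: a_eq zero_prod_def)
qed

text \<open>At a real point the inverse of a symmetric \<open>T - x\<close> is a symmetric everywhere defined
  operator, hence bounded by Hellinger--Toeplitz.\<close>

lemma real_resolvent_if_symmetric:
  assumes T: "csubspace T" and sym: "T \<subseteq> rel_adj T"
    and s: "shift_surj T (- complex_of_real x)" and i: "shift_inj T (- complex_of_real x)"
  shows "complex_of_real x \<in> rel_resolvent_set T"
proof -
  let ?x = "complex_of_real x"
  define R where "R = shift_solve T (- ?x)"
  have lin: "clinear_op R"
    unfolding R_def by (rule clinear_shift_solve[OF T s i])
  have "cinner (R u) w = cinner u (R w)" for u w
  proof -
    obtain a' b' where a: "(R u, a') \<in> T" "a' + (- ?x) *\<^sub>C R u = u"
      and b: "(R w, b') \<in> T" "b' + (- ?x) *\<^sub>C R w = w"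
      using shift_solve_in[OF s] unfolding R_def by metis
    have "cinner a' (R w) = cinner (R u) b'"
      using sym a(1) b(1) unfolding rel_adj_def by blast
    then have "cinner (R u) (b' + (- ?x) *\<^sub>C R w) = cinner (a' + (- ?x) *\<^sub>C R u) (R w)"
      by (simp add: cinner_simps scaleC_minus_left)
    then show ?thesis
      using a(2) b(2) by simp
  qed
  then obtain K where K: "op_bound R K"
    using hellinger_toeplitz[OF lin] by blast
  have "shift_lower_bound T (- ?x) K"
    unfolding shift_lower_bound_def
  proof (intro allI impI)
    fix f f' assume "(f, f') \<in> T"
    then have "R (f' + (- ?x) *\<^sub>C f) = f"
      unfolding R_def by (rule shift_solve_eqI[OF T s i]) simp
    then show "norm f \<le> K * norm (f' + (- ?x) *\<^sub>C f)"
      using K unfolding op_bound_def by metis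
  qed
  then show ?thesis
    using rel_resolvent_set_iff[OF T] s by blast
qed

lemma transform_resolvent_if_weyl_family_resolvent:
  assumes I: "isometric_rel \<Gamma>" and HD: "H \<subseteq> Domain \<Gamma>"
    and rH: "complex_of_real x \<in> rel_resolvent_set H"
    and rM: "0 \<in> rel_resolvent_set (rel_plus_scalar (weyl_family \<Gamma> (complex_of_real x)) (complex_of_real x))"
  shows "complex_of_real x \<in> rel_resolvent_set (main_transform \<Gamma>)"
proof -
  let ?x = "complex_of_real x"
  have \<Gamma>: "csubspace \<Gamma>"
    using I unfolding isometric_rel_def by blast
  have sH: "shift_surj H (- ?x)"
    using rH by (rule shift_surj_if_resolvent)
  obtain c where "shift_surj (weyl_family \<Gamma> ?x) ?x" "shift_lower_bound (weyl_family \<Gamma> ?x) ?x c"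
    using rM
    unfolding rel_resolvent_set_iff[OF csubspace_rel_plus_scalar[OF csubspace_weyl_family[OF \<Gamma>]]]
      shift_surj_rel_plus_scalar shift_lower_bound_rel_plus_scalar
    by auto
  then show ?thesis
    using sH
    by (intro real_resolvent_if_symmetric csubspace_main_transform \<Gamma> main_transform_subset_adj I
        shift_surj_main_transform[OF \<Gamma> HD] shift_inj_main_transform[OF I HD]
        shift_inj_if_lower_bound) simp_all
qed

section \<open>Unitarity\<close>

lemma converse_subset_bdry_adj:
  assumes "isometric_rel \<Gamma>"
  shows "converse \<Gamma> \<subseteq> bdry_adj \<Gamma>"
  using isometric_relD[OF assms] unfolding bdry_adj_def by fastforce

lemma bdry_adj_diff:
  assumes I: "isometric_rel \<Gamma>" and p: "((k, k'), (g, g')) \<in> bdry_adj \<Gamma>"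
    and q: "((f, f'), (h, h')) \<in> \<Gamma>"
  shows "((k - h, k' - h'), (g - f, g' - f')) \<in> bdry_adj \<Gamma>"
  unfolding bdry_adj_def
proof clarify
  fix a a' b b' assume ab: "((a, a'), (b, b')) \<in> \<Gamma>"
  have "cinner a' g - cinner a g' = cinner b' k - cinner b k'"
    using p ab unfolding bdry_adj_def by fast
  moreover have "cinner a' f - cinner a f' = cinner b' h - cinner b h'"
    using isometric_relD[OF I ab q] .
  ultimately have "(cinner a' g - cinner a g') - (cinner a' f - cinner a f')
      = (cinner b' k - cinner b k') - (cinner b' h - cinner b h')"
    by (simp only:)
  then show "cinner a' (g - f) - cinner a (g' - f') = cinner b' (k - h) - cinner b (k' - h')"
    by (simp add: cinner_diff_right algebra_simps)
qed

text \<open>Such an element of \<open>\<Gamma>\<^sup>[\<^sup>*\<^sup>]\<close> is orthogonal in \<open>\<HH> \<oplus> \<H>\<close> to \<open>ran (\<J>(\<Gamma>) - z)\<close>.\<close>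

lemma bdry_adj_eq_0:
  assumes p: "((k, - (cnj z *\<^sub>C k)), (g, cnj z *\<^sub>C g)) \<in> bdry_adj \<Gamma>"
    and s: "shift_surj (main_transform \<Gamma>) (- z)"
  shows "g = 0" and "k = 0"
proof -
  have "cinner v (g, k) = 0" for v
  proof -
    obtain q r q' r' where "((q, r), (q', r')) \<in> main_transform \<Gamma>"
      and v: "(q', r') + (- z) *\<^sub>C (q, r) = v"
      using s unfolding shift_surj_def by (metis prod.exhaust)
    then have "((q, q'), (r, - r')) \<in> \<Gamma>"
      by (simp add: main_transform_iff)
    with p have "cinner q' g - cinner q (cnj z *\<^sub>C g) = cinner (- r') k - cinner r (- (cnj z *\<^sub>C k))"
      unfolding bdry_adj_def by fastforce
    then show ?thesis
      unfolding v[symmetric] by (simp add: cinner_simps scaleC_minus_left algebra_simps)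
  qed
  then have "(g, k) = 0"
    by (rule eq_0_if_cinner_zero)
  then show "g = 0" "k = 0"
    by (simp_all add: zero_prod_def)
qed

lemma unitary_if_shift_surj:
  assumes I: "isometric_rel \<Gamma>"
    and s: "shift_surj (main_transform \<Gamma>) (- z)" and s': "shift_surj (main_transform \<Gamma>) (- cnj z)"
  shows "unitary_rel \<Gamma>"
proof -
  have "((k, k'), (g, g')) \<in> converse \<Gamma>" if p: "((k, k'), (g, g')) \<in> bdry_adj \<Gamma>" for k k' g g'
  proof -
    obtain f h f' h' where "((f, h), (f', h')) \<in> main_transform \<Gamma>"
      and v: "(f', h') + (- cnj z) *\<^sub>C (f, h) = (g' - cnj z *\<^sub>C g, - (k' + cnj z *\<^sub>C k))"
      using s' unfolding shift_surj_def by (metis prod.exhaust)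
    then have q: "((f, f'), (h, - h')) \<in> \<Gamma>"
      by (simp add: main_transform_iff)
    have g': "g' - f' = cnj z *\<^sub>C (g - f)" and k': "k' - - h' = - (cnj z *\<^sub>C (k - h))"
      using v by (auto simp: scaleC_minus_left scaleC_diff_right algebra_simps)
    have "((k - h, - (cnj z *\<^sub>C (k - h))), (g - f, cnj z *\<^sub>C (g - f))) \<in> bdry_adj \<Gamma>"
      using bdry_adj_diff[OF I p q] unfolding g' k' .
    from bdry_adj_eq_0[OF this s] g' k' have "k = h" "k' = - h'" "g = f" "g' = f'"
      by (simp_all add: eq_neg_iff_add_eq_0)
    with q show ?thesis
      by simp
  qed
  then have "bdry_adj \<Gamma> \<subseteq> converse \<Gamma>"
    by auto
  then show ?thesis
    unfolding unitary_rel_def using I converse_subset_bdry_adj[OF I] by blast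
qed

definition op_lipschitz_near ::
  "complex \<Rightarrow> (complex \<Rightarrow> 'a::real_normed_vector \<Rightarrow> 'b::real_normed_vector) \<Rightarrow> bool" where
  "op_lipschitz_near z F \<longleftrightarrow>
     (\<exists>C\<ge>0. \<forall>\<^sub>F w in nhds z. \<forall>y. norm (F w y - F z y) \<le> C * cmod (w - z) * norm y)"

definition op_bounded_near ::
  "complex \<Rightarrow> (complex \<Rightarrow> 'a::real_normed_vector \<Rightarrow> 'b::real_normed_vector) \<Rightarrow> bool" where
  "op_bounded_near z F \<longleftrightarrow> (\<exists>B\<ge>0. \<forall>\<^sub>F w in nhds z. op_bound (F w) B)"

lemma op_lipschitz_near_diff:
  assumes "op_lipschitz_near z F" "op_lipschitz_near z G"
  shows "op_lipschitz_near z (\<lambda>w y. F w y - G w y)"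
proof -
  obtain C D where "C \<ge> 0" "D \<ge> 0"
    and F: "\<forall>\<^sub>F w in nhds z. \<forall>y. norm (F w y - F z y) \<le> C * cmod (w - z) * norm y"
    and G: "\<forall>\<^sub>F w in nhds z. \<forall>y. norm (G w y - G z y) \<le> D * cmod (w - z) * norm y"
    using assms unfolding op_lipschitz_near_def by blast
  have "\<forall>\<^sub>F w in nhds z. \<forall>y.
      norm ((F w y - G w y) - (F z y - G z y)) \<le> (C + D) * cmod (w - z) * norm y"
    using F G
  proof eventually_elim
    case (elim w)
    show ?case
    proof
      fix y
      have "(F w y - G w y) - (F z y - G z y) = (F w y - F z y) - (G w y - G z y)"
        by (simp add: algebra_simps)
      then have "norm ((F w y - G w y) - (F z y - G z y)) \<le> norm (F w y - F z y) + norm (G w y - G z y)"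
        by (metis norm_triangle_ineq4)
      also have "\<dots> \<le> C * cmod (w - z) * norm y + D * cmod (w - z) * norm y"
        using elim by (intro add_mono) auto
      finally show "norm ((F w y - G w y) - (F z y - G z y)) \<le> (C + D) * cmod (w - z) * norm y"
        by (simp add: distrib_right)
    qed
  qed
  then show ?thesis
    unfolding op_lipschitz_near_def using \<open>C \<ge> 0\<close> \<open>D \<ge> 0\<close> add_nonneg_nonneg by blast
qed

lemma norm_le_max_0_if_op_bound: "op_bound F K \<Longrightarrow> norm (F y) \<le> max K 0 * norm y"
  unfolding op_bound_def by (meson max.cobounded1 mult_right_mono norm_ge_zero order_trans)

lemma op_lipschitz_near_compose:
  assumes lin: "\<forall>\<^sub>F w in nhds z. clinear_op (F w)" and "op_bounded_near z F"
    and "op_lipschitz_near z F" "op_lipschitz_near z G" and K: "op_bound (G z) K"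
  shows "op_lipschitz_near z (\<lambda>w y. F w (G w y))"
proof -
  obtain B where "B \<ge> 0" and B: "\<forall>\<^sub>F w in nhds z. op_bound (F w) B"
    using assms(2) unfolding op_bounded_near_def by blast
  obtain C where "C \<ge> 0"
    and F: "\<forall>\<^sub>F w in nhds z. \<forall>y. norm (F w y - F z y) \<le> C * cmod (w - z) * norm y"
    using assms(3) unfolding op_lipschitz_near_def by blast
  obtain D where "D \<ge> 0"
    and G: "\<forall>\<^sub>F w in nhds z. \<forall>y. norm (G w y - G z y) \<le> D * cmod (w - z) * norm y"
    using assms(4) unfolding op_lipschitz_near_def by blast
  have "\<forall>\<^sub>F w in nhds z. \<forall>y.
      norm (F w (G w y) - F z (G z y)) \<le> (B * D + C * max K 0) * cmod (w - z) * norm y"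
    using lin B F G
  proof eventually_elim
    case (elim w)
    show ?case
    proof
      fix y
      have "F w (G w y) - F z (G z y) = F w (G w y - G z y) + (F w (G z y) - F z (G z y))"
        using clinear_op_diff[OF elim(1)] by simp
      then have "norm (F w (G w y) - F z (G z y))
          \<le> norm (F w (G w y - G z y)) + norm (F w (G z y) - F z (G z y))"
        by (metis norm_triangle_ineq)
      also have "\<dots> \<le> B * (D * cmod (w - z) * norm y) + C * cmod (w - z) * (max K 0 * norm y)"
      proof (rule add_mono)
        have "norm (F w (G w y - G z y)) \<le> B * norm (G w y - G z y)"
          using elim(2) unfolding op_bound_def by blast
        also have "\<dots> \<le> B * (D * cmod (w - z) * norm y)"
          using elim(4) \<open>B \<ge> 0\<close> by (simp add: mult_left_mono)
        finally show "norm (F w (G w y - G z y)) \<le> B * (D * cmod (w - z) * norm y)" .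
        have "norm (F w (G z y) - F z (G z y)) \<le> C * cmod (w - z) * norm (G z y)"
          using elim(3) by blast
        also have "\<dots> \<le> C * cmod (w - z) * (max K 0 * norm y)"
          using norm_le_max_0_if_op_bound[OF K, of y] \<open>C \<ge> 0\<close> by (simp add: mult_left_mono)
        finally show "norm (F w (G z y) - F z (G z y)) \<le> C * cmod (w - z) * (max K 0 * norm y)" .
      qed
      finally show "norm (F w (G w y) - F z (G z y)) \<le> (B * D + C * max K 0) * cmod (w - z) * norm y"
        by (simp add: algebra_simps)
    qed
  qed
  moreover have "B * D + C * max K 0 \<ge> 0"
    using \<open>B \<ge> 0\<close> \<open>C \<ge> 0\<close> \<open>D \<ge> 0\<close> by simp
  ultimately show ?thesis
    unfolding op_lipschitz_near_def by blast
qed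

lemma op_lipschitz_near_scaleC_affine:
  assumes "op_lipschitz_near z F" and K: "op_bound (F z) K"
  shows "op_lipschitz_near z (\<lambda>w y. (a - w) *\<^sub>C F w y)"
proof -
  obtain C where "C \<ge> 0"
    and F: "\<forall>\<^sub>F w in nhds z. \<forall>y. norm (F w y - F z y) \<le> C * cmod (w - z) * norm y"
    using assms unfolding op_lipschitz_near_def by blast
  have "\<forall>\<^sub>F w in nhds z. dist w z < 1"
    by (auto simp: eventually_nhds_metric intro!: exI[of _ 1])
  then have near: "\<forall>\<^sub>F w in nhds z. cmod (a - w) \<le> cmod (a - z) + 1"
  proof eventually_elim
    case (elim w)
    have "cmod (a - w) \<le> cmod (a - z) + cmod (z - w)"
      using norm_triangle_ineq[of "a - z" "z - w"] by simp
    then show ?case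
      using elim by (simp add: dist_norm norm_minus_commute)
  qed
  have "\<forall>\<^sub>F w in nhds z. \<forall>y. norm ((a - w) *\<^sub>C F w y - (a - z) *\<^sub>C F z y)
      \<le> ((cmod (a - z) + 1) * C + max K 0) * cmod (w - z) * norm y"
    using F near
  proof eventually_elim
    case (elim w)
    show ?case
    proof
      fix y
      have "(a - w) *\<^sub>C F w y - (a - z) *\<^sub>C F z y = (a - w) *\<^sub>C (F w y - F z y) - (w - z) *\<^sub>C F z y"
        by (simp add: algebra_simps scaleC_diff_right)
      then have "norm ((a - w) *\<^sub>C F w y - (a - z) *\<^sub>C F z y)
          \<le> cmod (a - w) * norm (F w y - F z y) + cmod (w - z) * norm (F z y)"
        by (metis norm_scaleC norm_triangle_ineq4)
      also have "\<dots> \<le> (cmod (a - z) + 1) * (C * cmod (w - z) * norm y)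
          + cmod (w - z) * (max K 0 * norm y)"
      proof (rule add_mono)
        show "cmod (a - w) * norm (F w y - F z y) \<le> (cmod (a - z) + 1) * (C * cmod (w - z) * norm y)"
          using elim by (intro mult_mono) auto
        show "cmod (w - z) * norm (F z y) \<le> cmod (w - z) * (max K 0 * norm y)"
          using norm_le_max_0_if_op_bound[OF K, of y] by (simp add: mult_left_mono)
      qed
      finally show "norm ((a - w) *\<^sub>C F w y - (a - z) *\<^sub>C F z y)
          \<le> ((cmod (a - z) + 1) * C + max K 0) * cmod (w - z) * norm y"
        by (simp add: algebra_simps)
    qed
  qed
  moreover have "(cmod (a - z) + 1) * C + max K 0 \<ge> 0"
    using \<open>C \<ge> 0\<close> by simp
  ultimately show ?thesis
    unfolding op_lipschitz_near_def by blast
qed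

lemma onorm_nonneg_if_bound:
  assumes "\<And>x. norm (f x) \<le> b * norm x"
  shows "0 \<le> onorm f"
proof -
  have "norm (f x) / norm x \<le> max b 0" for x
  proof (cases "x = 0")
    case False
    then have "norm (f x) / norm x \<le> b"
      using assms[of x] by (simp add: pos_divide_le_eq)
    then show ?thesis
      by simp
  qed simp
  then have "bdd_above (range (\<lambda>x. norm (f x) / norm x))"
    by (intro bdd_aboveI2) blast
  then have "norm (f 0) / norm 0 \<le> onorm f"
    unfolding onorm_def using cSUP_upper[of 0 UNIV "\<lambda>x. norm (f x) / norm x"] by simp
  then show ?thesis
    by simp
qed

lemma op_difference_quotient_tendsto:
  assumes KI: "\<forall>\<^sub>F w in nhds z. \<forall>u. R w u - R z u = (w - z) *\<^sub>C X w (G u)"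
    and X: "op_lipschitz_near z X" and G: "op_bound G K" "0 \<le> K"
  shows "((\<lambda>w. onorm (\<lambda>u. (1 / (w - z)) *\<^sub>C (R w u - R z u) - X z (G u))) \<longlongrightarrow> 0) (at z)"
proof -
  obtain C where "C \<ge> 0"
    and Xz: "\<forall>\<^sub>F w in nhds z. \<forall>y. norm (X w y - X z y) \<le> C * cmod (w - z) * norm y"
    using X unfolding op_lipschitz_near_def by blast
  have "\<forall>\<^sub>F w in nhds z. w \<noteq> z \<longrightarrow> w \<noteq> z \<and> (\<forall>u. R w u - R z u = (w - z) *\<^sub>C X w (G u))
      \<and> (\<forall>y. norm (X w y - X z y) \<le> C * cmod (w - z) * norm y)"
    using KI Xz by eventually_elim blast
  then have "\<forall>\<^sub>F w in at z. w \<noteq> z \<and> (\<forall>u. R w u - R z u = (w - z) *\<^sub>C X w (G u))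
      \<and> (\<forall>y. norm (X w y - X z y) \<le> C * cmod (w - z) * norm y)"
    by (simp add: eventually_at_filter)
  then have "\<forall>\<^sub>F w in at z. norm (onorm (\<lambda>u. (1 / (w - z)) *\<^sub>C (R w u - R z u) - X z (G u)))
      \<le> C * K * cmod (w - z)"
  proof eventually_elim
    case (elim w)
    have bound: "norm ((1 / (w - z)) *\<^sub>C (R w u - R z u) - X z (G u)) \<le> C * K * cmod (w - z) * norm u"
      for u
    proof -
      have "(1 / (w - z)) *\<^sub>C (R w u - R z u) = X w (G u)"
        using elim by simp
      then have "norm ((1 / (w - z)) *\<^sub>C (R w u - R z u) - X z (G u)) \<le> C * cmod (w - z) * norm (G u)"
        using elim by simp
      also have "\<dots> \<le> C * cmod (w - z) * (K * norm u)"
        using G \<open>C \<ge> 0\<close> unfolding op_bound_def by (simp add: mult_left_mono)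
      finally show ?thesis
        by (simp add: mult_ac)
    qed
    then have "onorm (\<lambda>u. (1 / (w - z)) *\<^sub>C (R w u - R z u) - X z (G u)) \<le> C * K * cmod (w - z)"
      using \<open>C \<ge> 0\<close> G(2) by (intro onorm_bound) simp_all
    with onorm_nonneg_if_bound[OF bound] show ?case
      by simp
  qed
  moreover have "((\<lambda>w. C * K * cmod (w - z)) \<longlongrightarrow> 0) (at z)"
    by (auto intro!: tendsto_eq_intros)
  ultimately show ?thesis
    by (rule Lim_null_comparison)
qed

lemma op_bound_compose:
  assumes "op_bound F A" "op_bound G B" "0 \<le> A"
  shows "op_bound (\<lambda>u. F (G u)) (A * B)"
  unfolding op_bound_def
proof
  fix u
  have "norm (F (G u)) \<le> A * norm (G u)"
    using assms(1) unfolding op_bound_def by blast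
  also have "\<dots> \<le> A * (B * norm u)"
    using assms(2,3) unfolding op_bound_def by (simp add: mult_left_mono)
  finally show "norm (F (G u)) \<le> A * B * norm u"
    by (simp add: mult_ac)
qed

lemma norm_fst_le_norm: "norm (fst p) \<le> norm p"
  by (cases p) (simp add: norm_fst_le)

lemma norm_snd_le_norm: "norm (snd p) \<le> norm p"
  by (cases p) (simp add: norm_snd_le)

lemma near_same_half_plane:
  assumes "Im z * Im \<mu> > 0" and "dist w z < \<bar>Im z\<bar> / 2"
  shows "Im w * Im \<mu> > 0" and "\<bar>Im z\<bar> / 2 \<le> \<bar>Im w\<bar>"
proof -
  have "\<bar>Im w - Im z\<bar> < \<bar>Im z\<bar> / 2"
    using assms(2) abs_Im_le_cmod[of "w - z"] unfolding dist_norm by simp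
  then have close: "Im w - Im z < \<bar>Im z\<bar> / 2" "Im z - Im w < \<bar>Im z\<bar> / 2"
    by linarith+
  consider "Im z > 0" "Im \<mu> > 0" | "Im z < 0" "Im \<mu> < 0"
    using assms(1) by (auto simp: zero_less_mult_iff)
  then have "Im w * Im \<mu> > 0 \<and> \<bar>Im z\<bar> / 2 \<le> \<bar>Im w\<bar>"
  proof cases
    case 1
    then have "Im w > Im z / 2"
      using close by simp
    then show ?thesis
      using 1 by simp
  next
    case 2
    then have "Im w < Im z / 2"
      using close by simp
    then show ?thesis
      using 2 by (simp add: mult_neg_neg)
  qed
  then show "Im w * Im \<mu> > 0" and "\<bar>Im z\<bar> / 2 \<le> \<bar>Im w\<bar>"
    by auto
qed

lemma eventually_same_half_plane:
  assumes "Im z * Im \<mu> > 0"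
  shows "\<forall>\<^sub>F w in nhds z. Im w * Im \<mu> > 0 \<and> \<bar>Im z\<bar> / 2 \<le> \<bar>Im w\<bar>
    \<and> cmod (\<mu> - w) \<le> cmod (\<mu> - z) + \<bar>Im z\<bar> / 2"
proof -
  have "\<bar>Im z\<bar> / 2 > 0"
    using assms by auto
  then have "\<forall>\<^sub>F w in nhds z. dist w z < \<bar>Im z\<bar> / 2"
    unfolding eventually_nhds_metric by blast
  then show ?thesis
  proof eventually_elim
    case (elim w)
    have "cmod (\<mu> - w) \<le> cmod (\<mu> - z) + cmod (z - w)"
      using norm_triangle_ineq[of "\<mu> - z" "z - w"] by simp
    then show ?case
      using near_same_half_plane[OF assms elim] elim by (simp add: dist_norm norm_minus_commute)
  qed
qed

section \<open>Consequences of a real regular point of the main transform\<close>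

locale regular_main_transform =
  fixes \<Gamma> :: "(('h::chilbert \<times> 'h) \<times> ('k::chilbert \<times> 'k)) set" and x :: real
  assumes isometric: "isometric_rel \<Gamma>"
    and resolvent: "complex_of_real x \<in> rel_resolvent_set (main_transform \<Gamma>)"
begin

abbreviation "\<J> \<equiv> main_transform \<Gamma>"
abbreviation "M \<equiv> weyl_family \<Gamma>"

lemma csubspace_\<Gamma>: "csubspace \<Gamma>"
  using isometric unfolding isometric_rel_def by blast

lemma csubspace_\<J>: "csubspace \<J>"
  using csubspace_main_transform[OF csubspace_\<Gamma>] .

lemma csubspace_M: "csubspace (M z)"
  using csubspace_weyl_family[OF csubspace_\<Gamma>] .

lemma shift_surj_\<J>_real: "shift_surj \<J> (- complex_of_real x)"
  and shift_lower_bound_\<J>_real: "\<exists>c. shift_lower_bound \<J> (- complex_of_real x) c"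
  using resolvent rel_resolvent_set_iff[OF csubspace_\<J>] by blast+

lemma shift_lower_bound_\<J>: "Im l \<noteq> 0 \<Longrightarrow> shift_lower_bound \<J> l (1 / \<bar>Im l\<bar>)"
  using Im_cinner_eq_0_if_symmetric[OF main_transform_subset_adj[OF isometric]]
  by (intro shift_lower_bound_Im) auto

text \<open>Step from the real point \<open>x\<close> a little into the half-plane of \<open>l\<close>, then move inside it.\<close>

lemma shift_surj_\<J>:
  assumes l: "Im l \<noteq> 0"
  shows "shift_surj \<J> l"
proof -
  obtain c0 where "shift_lower_bound \<J> (- complex_of_real x) c0"
    using shift_lower_bound_\<J>_real by blast
  then obtain c where c: "shift_lower_bound \<J> (- complex_of_real x) c" "c \<ge> 1"
    using shift_lower_bound_mono[of _ _ c0 "max c0 1"] by fastforce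
  define s :: real where "s = (if Im l > 0 then 1 else - 1)"
  define l1 where "l1 = - complex_of_real x + \<i> * complex_of_real (s / (2 * c))"
  have "cmod (l1 - - complex_of_real x) = 1 / (2 * c)"
    using c(2) unfolding l1_def s_def by (auto simp: norm_mult norm_divide)
  then have "cmod (l1 - - complex_of_real x) * c < 1"
    using c(2) by (simp add: field_simps)
  then have s1: "shift_surj \<J> l1"
    using c by (intro shift_surj_perturb[OF csubspace_\<J> shift_surj_\<J>_real]) auto
  have "Im l1 * Im l > 0"
    using c(2) l unfolding l1_def s_def by (auto simp: zero_less_mult_iff)
  moreover have "0 \<le> Im (cinner f' f) * Im l1" if "(f, f') \<in> \<J>" for f f'
    using Im_cinner_eq_0_if_symmetric[OF main_transform_subset_adj[OF isometric] that] by simp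
  ultimately show ?thesis
    by (rule shift_surj_half_plane[OF csubspace_\<J> s1])
qed

lemma unitary: "unitary_rel \<Gamma>"
  using unitary_if_shift_surj[OF isometric, of "complex_of_real x"] shift_surj_\<J>_real by simp

lemma shift_surj_M:
  assumes "Im z * Im \<mu> > 0"
  shows "shift_surj (M z) \<mu>"
proof -
  have "Im z \<noteq> 0"
    using assms by auto
  then have "shift_surj (M z) z"
    by (intro shift_surj_weyl_family shift_surj_\<J>) simp
  moreover have "0 \<le> Im (cinner f' f) * Im z" if "(f, f') \<in> M z" for f f'
    using weyl_family_sign[OF isometric _ that] by simp
  ultimately show ?thesis
    using shift_surj_half_plane[OF csubspace_M _ assms] by blast
qed

lemma shift_lower_bound_M:
  assumes "Im z * Im \<mu> > 0"
  shows "shift_lower_bound (M z) \<mu> (1 / \<bar>Im \<mu>\<bar>)"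
proof (rule shift_lower_bound_Im)
  show "Im \<mu> \<noteq> 0"
    using assms by auto
  show "0 \<le> Im (cinner f' f) * Im \<mu>" if "(f, f') \<in> M z" for f f'
    using weyl_family_sign[OF isometric _ that] assms by simp
qed

lemma shift_inj_M: "Im z * Im \<mu> > 0 \<Longrightarrow> shift_inj (M z) \<mu>"
  using shift_lower_bound_M by (rule shift_inj_if_lower_bound)

lemma rel_adj_M:
  assumes "Im z \<noteq> 0"
  shows "rel_adj (M z) = M (cnj z)"
proof -
  have "Im z * Im z > 0" "Im (cnj z) * Im (cnj z) > 0"
    using assms by (auto simp: zero_less_mult_iff linorder_neq_iff)
  then have "shift_surj (M z) z" "shift_surj (M (cnj z)) (cnj z)"
    by (simp_all only: shift_surj_M)
  then have "rel_adj (M z) \<subseteq> M (cnj z)"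
    using weyl_family_cnj_subset_adj[OF isometric] by (intro rel_adj_subset_if_shift_surj)
  then show ?thesis
    using weyl_family_cnj_subset_adj[OF isometric] by blast
qed

lemma M_maximal:
  assumes "Im z * Im \<mu> > 0" and S: "csubspace S" "M z \<subseteq> S"
    and sign: "\<And>f f'. (f, f') \<in> S \<Longrightarrow> 0 \<le> Im (cinner f' f) * Im \<mu>"
  shows "S = M z"
  using assms shift_surj_M by (intro antisym subset_if_shift_surj_sign[OF S(1), of "M z" \<mu>]) auto

lemma max_dissipative_M:
  assumes "Im z > 0"
  shows "max_dissipative (M z)"
proof -
  have "dissipative_rel (M z)"
    unfolding dissipative_rel_def using csubspace_M weyl_family_sign[OF isometric, of z \<i>] assms by auto
  moreover have "S = M z" if "dissipative_rel S" "M z \<subseteq> S" for S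
    using that assms unfolding dissipative_rel_def by (intro M_maximal[of z \<i>]) auto
  ultimately show ?thesis
    unfolding max_dissipative_def by blast
qed

lemma max_accumulative_M:
  assumes "Im z < 0"
  shows "max_accumulative (M z)"
proof -
  have "accumulative_rel (M z)"
    unfolding accumulative_rel_def using csubspace_M weyl_family_sign[OF isometric, of z "- \<i>"] assms
    by fastforce
  moreover have "S = M z" if "accumulative_rel S" "M z \<subseteq> S" for S
    using that assms unfolding accumulative_rel_def by (intro M_maximal[of z "- \<i>"]) auto
  ultimately show ?thesis
    unfolding max_accumulative_def by blast
qed

lemma clinear_\<J>_resolvent: "Im w \<noteq> 0 \<Longrightarrow> clinear_op (shift_solve \<J> (- w))"
  by (intro clinear_shift_solve csubspace_\<J> shift_surj_\<J> shift_inj_if_lower_bound[OF shift_lower_bound_\<J>])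
    simp_all

lemma op_bound_\<J>_resolvent: "Im w \<noteq> 0 \<Longrightarrow> op_bound (shift_solve \<J> (- w)) (1 / \<bar>Im w\<bar>)"
  using op_bound_shift_solve[OF shift_surj_\<J> shift_lower_bound_\<J>, of "- w"] by simp

lemma \<J>_resolvent_mem:
  assumes "Im w \<noteq> 0" and "shift_solve \<J> (- w) (y1, y2) = (p, q)"
  shows "((p, y1 + w *\<^sub>C p), (q, - (y2 + w *\<^sub>C q))) \<in> \<Gamma>"
proof -
  have "Im (- w) \<noteq> 0"
    using assms(1) by simp
  from shift_solve_in[OF shift_surj_\<J>[OF this], of "(y1, y2)"]
  obtain p' q' where "((p, q), (p', q')) \<in> \<J>" "(p', q') + (- w) *\<^sub>C (p, q) = (y1, y2)"
    unfolding assms(2) by (metis prod.exhaust)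
  then show ?thesis
    by (auto simp: main_transform_iff scaleC_minus_left algebra_simps)
qed

lemma \<J>_resolvent_identity:
  assumes z: "Im z \<noteq> 0" and w: "Im w \<noteq> 0"
  shows "shift_solve \<J> (- w) y - shift_solve \<J> (- z) y
    = (w - z) *\<^sub>C shift_solve \<J> (- w) (shift_solve \<J> (- z) y)"
proof -
  have z': "Im (- z) \<noteq> 0" and w': "Im (- w) \<noteq> 0"
    using z w by auto
  define a where "a = shift_solve \<J> (- z) y"
  define b where "b = shift_solve \<J> (- w) y"
  obtain a' b' where a: "(a, a') \<in> \<J>" "a' + (- z) *\<^sub>C a = y"
    and b: "(b, b') \<in> \<J>" "b' + (- w) *\<^sub>C b = y"
    using shift_solve_in[OF shift_surj_\<J>[OF z']] shift_solve_in[OF shift_surj_\<J>[OF w']]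
    unfolding a_def b_def by metis
  have "(b - a, b' - a') \<in> \<J>"
    using csubspace_diff[OF csubspace_\<J> b(1) a(1)] by simp
  moreover have "(b' - a') + (- w) *\<^sub>C (b - a) = (b' + (- w) *\<^sub>C b) - (a' + (- z) *\<^sub>C a) + (w - z) *\<^sub>C a"
    by (simp add: algebra_simps scaleC_minus_left scaleC_diff_right)
  then have "(b' - a') + (- w) *\<^sub>C (b - a) = (w - z) *\<^sub>C a"
    by (simp only: a(2) b(2) diff_self add_0_left)
  ultimately have "shift_solve \<J> (- w) ((w - z) *\<^sub>C a) = b - a"
    by (rule shift_solve_eqI[OF csubspace_\<J> shift_surj_\<J>[OF w'] shift_inj_if_lower_bound[OF shift_lower_bound_\<J>[OF w']]])
  then show ?thesis
    unfolding a_def b_def using clinear_op_scaleC[OF clinear_\<J>_resolvent[OF w]] by simp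
qed

text \<open>The lower left block of \<open>(\<J>(\<Gamma>) - w)\<^sup>-\<^sup>1\<close> with respect to \<open>\<HH> \<oplus> \<H>\<close>.\<close>

definition block21 :: "complex \<Rightarrow> 'h \<Rightarrow> 'k" where
  "block21 w y = snd (shift_solve \<J> (- w) (y, 0))"

lemma clinear_block21:
  assumes "Im w \<noteq> 0"
  shows "clinear_op (block21 w)"
proof -
  have "clinear_op (\<lambda>y::'h. (y, 0::'k))" "clinear_op (snd :: 'h \<times> 'k \<Rightarrow> 'k)"
    unfolding clinear_op_def by simp_all
  from clinear_op_compose[OF this(2) clinear_op_compose[OF clinear_\<J>_resolvent[OF assms] this(1)]]
  show ?thesis
    unfolding block21_def[abs_def] .
qed

lemma op_bound_block21:
  assumes "Im w \<noteq> 0"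
  shows "op_bound (block21 w) (1 / \<bar>Im w\<bar>)"
  unfolding op_bound_def
proof
  fix y
  have "norm (block21 w y) \<le> norm (shift_solve \<J> (- w) (y, 0))"
    unfolding block21_def by (rule norm_snd_le_norm)
  also have "\<dots> \<le> 1 / \<bar>Im w\<bar> * norm (y, 0::'k)"
    using op_bound_\<J>_resolvent[OF assms] unfolding op_bound_def by blast
  finally show "norm (block21 w y) \<le> 1 / \<bar>Im w\<bar> * norm y"
    by simp
qed

lemma norm_block21_diff:
  assumes z: "Im z \<noteq> 0" and w: "Im w \<noteq> 0"
  shows "norm (block21 w y - block21 z y) \<le> cmod (w - z) / (\<bar>Im w\<bar> * \<bar>Im z\<bar>) * norm y"
proof -
  let ?r = "shift_solve \<J> (- w) (shift_solve \<J> (- z) (y, 0))"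
  have "block21 w y - block21 z y = snd ((w - z) *\<^sub>C ?r)"
    unfolding block21_def \<J>_resolvent_identity[OF z w, symmetric] by simp
  then have "norm (block21 w y - block21 z y) \<le> cmod (w - z) * norm ?r"
    using norm_snd_le_norm[of "(w - z) *\<^sub>C ?r"] by (simp add: norm_scaleC)
  also have "\<dots> \<le> cmod (w - z) * (1 / \<bar>Im w\<bar> * (1 / \<bar>Im z\<bar> * norm (y, 0::'k)))"
  proof (rule mult_left_mono)
    have "norm ?r \<le> 1 / \<bar>Im w\<bar> * norm (shift_solve \<J> (- z) (y, 0))"
      using op_bound_\<J>_resolvent[OF w] unfolding op_bound_def by blast
    also have "\<dots> \<le> 1 / \<bar>Im w\<bar> * (1 / \<bar>Im z\<bar> * norm (y, 0::'k))"
    proof (rule mult_left_mono)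
      show "norm (shift_solve \<J> (- z) (y, 0)) \<le> 1 / \<bar>Im z\<bar> * norm (y, 0::'k)"
        using op_bound_\<J>_resolvent[OF z] unfolding op_bound_def by blast
    qed simp
    finally show "norm ?r \<le> 1 / \<bar>Im w\<bar> * (1 / \<bar>Im z\<bar> * norm (y, 0::'k))" .
  qed simp
  finally show ?thesis
    by (simp add: field_simps)
qed

abbreviation weyl_resolvent :: "complex \<Rightarrow> complex \<Rightarrow> 'k \<Rightarrow> 'k" where
  "weyl_resolvent \<mu> w \<equiv> shift_solve (M w) \<mu>"

lemma clinear_weyl_resolvent: "Im w * Im \<mu> > 0 \<Longrightarrow> clinear_op (weyl_resolvent \<mu> w)"
  by (intro clinear_shift_solve csubspace_M shift_surj_M shift_inj_M)

lemma op_bound_weyl_resolvent: "Im w * Im \<mu> > 0 \<Longrightarrow> op_bound (weyl_resolvent \<mu> w) (1 / \<bar>Im \<mu>\<bar>)"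
  by (intro op_bound_shift_solve shift_surj_M shift_lower_bound_M)

lemma weyl_resolvent_mem:
  assumes "Im w * Im \<mu> > 0"
  shows "(weyl_resolvent \<mu> w u, u - \<mu> *\<^sub>C weyl_resolvent \<mu> w u) \<in> M w"
proof -
  obtain h' where "(weyl_resolvent \<mu> w u, h') \<in> M w" "h' + \<mu> *\<^sub>C weyl_resolvent \<mu> w u = u"
    using shift_solve_in[OF shift_surj_M[OF assms]] .
  then show ?thesis
    by (metis add_diff_cancel)
qed

text \<open>The \<open>\<gamma>\<close>-field: by \<open>gamma_field_mem\<close>, \<open>gamma_field \<mu> z u\<close> is the \<open>f\<close> with
  \<open>((f, z f), (R u, u - \<mu> R u)) \<in> \<Gamma>\<close>, where \<open>R = (M(z) + \<mu>)\<^sup>-\<^sup>1\<close>.\<close>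

definition gamma_field :: "complex \<Rightarrow> complex \<Rightarrow> 'k \<Rightarrow> 'h" where
  "gamma_field \<mu> z u = fst (shift_solve \<J> (- z) (0, - (u + (z - \<mu>) *\<^sub>C weyl_resolvent \<mu> z u)))"

lemma gamma_field_mem:
  assumes P: "Im z * Im \<mu> > 0"
  shows "((gamma_field \<mu> z u, z *\<^sub>C gamma_field \<mu> z u),
      (weyl_resolvent \<mu> z u, u - \<mu> *\<^sub>C weyl_resolvent \<mu> z u)) \<in> \<Gamma>"
proof -
  let ?a = "weyl_resolvent \<mu> z u"
  obtain f where f: "((f, z *\<^sub>C f), (?a, u - \<mu> *\<^sub>C ?a)) \<in> \<Gamma>"
    using weyl_resolvent_mem[OF P] unfolding weyl_family_iff by blast
  have z: "Im (- z) \<noteq> 0"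
    using P by auto
  have "shift_solve \<J> (- z) (0, - ((u - \<mu> *\<^sub>C ?a) + z *\<^sub>C ?a)) = (f, ?a)"
    using weyl_family_shift_main_transform[OF f]
    by (rule shift_solve_eqI[OF csubspace_\<J> shift_surj_\<J>[OF z]
          shift_inj_if_lower_bound[OF shift_lower_bound_\<J>[OF z]]])
  moreover have "(u - \<mu> *\<^sub>C ?a) + z *\<^sub>C ?a = u + (z - \<mu>) *\<^sub>C ?a"
    by (simp add: algebra_simps scaleC_diff_left)
  ultimately show ?thesis
    using f unfolding gamma_field_def by simp
qed

lemma clinear_gamma_field:
  assumes P: "Im z * Im \<mu> > 0"
  shows "clinear_op (gamma_field \<mu> z)"
proof -
  note R = clinear_weyl_resolvent[OF P]
  have "clinear_op (\<lambda>u. (0::'h, - (u + (z - \<mu>) *\<^sub>C weyl_resolvent \<mu> z u)))"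
    unfolding clinear_op_def
    by (simp add: clinear_op_add[OF R] clinear_op_scaleC[OF R] scaleC_add_right algebra_simps)
  moreover have "clinear_op (fst :: 'h \<times> 'k \<Rightarrow> 'h)"
    unfolding clinear_op_def by simp
  moreover have "Im z \<noteq> 0"
    using P by auto
  ultimately show ?thesis
    unfolding gamma_field_def[abs_def]
    using clinear_op_compose[OF _ clinear_op_compose[OF clinear_\<J>_resolvent]] by blast
qed

lemma op_bound_gamma_field:
  assumes P: "Im z * Im \<mu> > 0"
  shows "op_bound (gamma_field \<mu> z) ((1 + cmod (z - \<mu>) / \<bar>Im \<mu>\<bar>) / \<bar>Im z\<bar>)"
  unfolding op_bound_def
proof
  fix u
  let ?v = "u + (z - \<mu>) *\<^sub>C weyl_resolvent \<mu> z u"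
  have z: "Im z \<noteq> 0"
    using P by auto
  have "norm (gamma_field \<mu> z u) \<le> norm (shift_solve \<J> (- z) (0, - ?v))"
    unfolding gamma_field_def by (rule norm_fst_le_norm)
  also have "\<dots> \<le> 1 / \<bar>Im z\<bar> * norm (0::'h, - ?v)"
    using op_bound_\<J>_resolvent[OF z] unfolding op_bound_def by blast
  also have "norm (0::'h, - ?v) \<le> norm u + cmod (z - \<mu>) * (1 / \<bar>Im \<mu>\<bar> * norm u)"
  proof -
    have "norm (0::'h, - ?v) = norm ?v"
      by (simp only: norm_Pair1 norm_minus_cancel)
    also have "\<dots> \<le> norm u + cmod (z - \<mu>) * norm (weyl_resolvent \<mu> z u)"
      using norm_triangle_ineq[of u "(z - \<mu>) *\<^sub>C weyl_resolvent \<mu> z u"] by (simp add: norm_scaleC)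
    also have "\<dots> \<le> norm u + cmod (z - \<mu>) * (1 / \<bar>Im \<mu>\<bar> * norm u)"
      using op_bound_weyl_resolvent[OF P] unfolding op_bound_def by (intro add_left_mono mult_left_mono) auto
    finally show ?thesis .
  qed
  finally show "norm (gamma_field \<mu> z u) \<le> (1 + cmod (z - \<mu>) / \<bar>Im \<mu>\<bar>) / \<bar>Im z\<bar> * norm u"
    using z by (simp add: divide_right_mono field_simps)
qed

text \<open>By \<open>weyl_resolvent_identity\<close>, \<open>R(w) - R(z) = (w - z) weyl_slope \<mu> w \<circ> gamma_field \<mu> z\<close>.\<close>

definition weyl_slope :: "complex \<Rightarrow> complex \<Rightarrow> 'h \<Rightarrow> 'k" where
  "weyl_slope \<mu> w y = block21 w y - (\<mu> - w) *\<^sub>C weyl_resolvent \<mu> w (block21 w y)"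

lemma clinear_weyl_slope:
  assumes P: "Im w * Im \<mu> > 0"
  shows "clinear_op (weyl_slope \<mu> w)"
proof -
  have "Im w \<noteq> 0"
    using P by auto
  then show ?thesis
    unfolding weyl_slope_def[abs_def]
    by (intro clinear_op_compose_diff clinear_block21 clinear_op_compose_scaleC
        clinear_op_compose[OF clinear_weyl_resolvent[OF P]])
qed

lemma op_bound_weyl_slope:
  assumes P: "Im w * Im \<mu> > 0"
  shows "op_bound (weyl_slope \<mu> w) ((1 + cmod (\<mu> - w) / \<bar>Im \<mu>\<bar>) / \<bar>Im w\<bar>)"
  unfolding op_bound_def
proof
  fix y
  have w: "Im w \<noteq> 0"
    using P by auto
  have "norm (weyl_slope \<mu> w y)
      \<le> norm (block21 w y) + cmod (\<mu> - w) * norm (weyl_resolvent \<mu> w (block21 w y))"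
    unfolding weyl_slope_def
    using norm_triangle_ineq4[of "block21 w y" "(\<mu> - w) *\<^sub>C weyl_resolvent \<mu> w (block21 w y)"]
    by (simp add: norm_scaleC)
  also have "\<dots> \<le> norm (block21 w y) + cmod (\<mu> - w) * (1 / \<bar>Im \<mu>\<bar> * norm (block21 w y))"
    using op_bound_weyl_resolvent[OF P] unfolding op_bound_def by (intro add_left_mono mult_left_mono) auto
  also have "\<dots> = (1 + cmod (\<mu> - w) / \<bar>Im \<mu>\<bar>) * norm (block21 w y)"
    by (simp add: algebra_simps)
  also have "\<dots> \<le> (1 + cmod (\<mu> - w) / \<bar>Im \<mu>\<bar>) * (1 / \<bar>Im w\<bar> * norm y)"
  proof (rule mult_left_mono)
    show "norm (block21 w y) \<le> 1 / \<bar>Im w\<bar> * norm y"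
      using op_bound_block21[OF w] unfolding op_bound_def by blast
  qed simp
  finally show "norm (weyl_slope \<mu> w y) \<le> (1 + cmod (\<mu> - w) / \<bar>Im \<mu>\<bar>) / \<bar>Im w\<bar> * norm y"
    by simp
qed

text \<open>With \<open>f = \<gamma>(z) u\<close>, \<open>(p, q) = (\<J>(\<Gamma>) - w)\<^sup>-\<^sup>1 (f, 0)\<close> and \<open>g\<close> the \<open>\<gamma>(w)\<close>-vector of \<open>u\<close>,
  the combination \<open>\<Gamma>(g) - \<Gamma>(f) - (w - z) \<Gamma>(p)\<close> lies in \<open>M(w)\<close>; solving it gives the identity.\<close>

lemma weyl_resolvent_identity:
  assumes Pz: "Im z * Im \<mu> > 0" and Pw: "Im w * Im \<mu> > 0"
  shows "weyl_resolvent \<mu> w u - weyl_resolvent \<mu> z u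
    = (w - z) *\<^sub>C weyl_slope \<mu> w (gamma_field \<mu> z u)"
proof -
  define f where "f = gamma_field \<mu> z u"
  define a where "a = weyl_resolvent \<mu> z u"
  define b where "b = weyl_resolvent \<mu> w u"
  define q where "q = block21 w f"
  obtain p where pq: "shift_solve \<J> (- w) (f, 0) = (p, q)"
    unfolding q_def block21_def by (metis prod.collapse)
  have w: "Im w \<noteq> 0"
    using Pw by auto
  have Gf: "((f, z *\<^sub>C f), (a, u - \<mu> *\<^sub>C a)) \<in> \<Gamma>"
    unfolding f_def a_def by (rule gamma_field_mem[OF Pz])
  obtain g where Gg: "((g, w *\<^sub>C g), (b, u - \<mu> *\<^sub>C b)) \<in> \<Gamma>"
    using weyl_resolvent_mem[OF Pw] unfolding weyl_family_iff b_def by blast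
  have Gp: "((p, f + w *\<^sub>C p), (q, - (w *\<^sub>C q))) \<in> \<Gamma>"
    using \<J>_resolvent_mem[OF w pq] by simp
  define \<phi> where "\<phi> = g - f - (w - z) *\<^sub>C p"
  define \<beta> where "\<beta> = b - a - (w - z) *\<^sub>C q"
  have "((g, w *\<^sub>C g), (b, u - \<mu> *\<^sub>C b)) - ((f, z *\<^sub>C f), (a, u - \<mu> *\<^sub>C a))
      - (w - z) *\<^sub>C ((p, f + w *\<^sub>C p), (q, - (w *\<^sub>C q))) \<in> \<Gamma>"
    using csubspace_diff[OF csubspace_\<Gamma> csubspace_diff[OF csubspace_\<Gamma> Gg Gf] csubspace_scaleC[OF csubspace_\<Gamma> Gp]] .
  moreover have "((g, w *\<^sub>C g), (b, u - \<mu> *\<^sub>C b)) - ((f, z *\<^sub>C f), (a, u - \<mu> *\<^sub>C a))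
      - (w - z) *\<^sub>C ((p, f + w *\<^sub>C p), (q, - (w *\<^sub>C q)))
      = ((\<phi>, w *\<^sub>C \<phi>), (\<beta>, ((w - z) * (w - \<mu>)) *\<^sub>C q - \<mu> *\<^sub>C \<beta>))"
    unfolding \<phi>_def \<beta>_def by (simp add: algebra_simps scaleC_diff_left scaleC_diff_right)
  ultimately have "(\<beta>, ((w - z) * (w - \<mu>)) *\<^sub>C q - \<mu> *\<^sub>C \<beta>) \<in> M w"
    unfolding weyl_family_iff by auto
  then have "weyl_resolvent \<mu> w (((w - z) * (w - \<mu>)) *\<^sub>C q) = \<beta>"
    by (rule shift_solve_eqI[OF csubspace_M shift_surj_M[OF Pw] shift_inj_M[OF Pw]]) simp
  then have "\<beta> = ((w - z) * (w - \<mu>)) *\<^sub>C weyl_resolvent \<mu> w q"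
    using clinear_op_scaleC[OF clinear_weyl_resolvent[OF Pw]] by simp
  then have "b - a = (w - z) *\<^sub>C (q - (\<mu> - w) *\<^sub>C weyl_resolvent \<mu> w q)"
    unfolding \<beta>_def by (simp add: algebra_simps scaleC_diff_left scaleC_diff_right)
  then show ?thesis
    unfolding weyl_slope_def f_def[symmetric] q_def[symmetric] a_def[symmetric] b_def[symmetric] .
qed

lemma op_lipschitz_near_block21:
  assumes z: "Im z \<noteq> 0"
  shows "op_lipschitz_near z block21"
proof -
  have "Im z * Im z > 0"
    using z not_real_square_gt_zero by blast
  from eventually_same_half_plane[OF this]
  have "\<forall>\<^sub>F w in nhds z. \<forall>y. norm (block21 w y - block21 z y) \<le> 2 / \<bar>Im z\<bar>\<^sup>2 * cmod (w - z) * norm y"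
  proof eventually_elim
    case (elim w)
    then have w: "Im w \<noteq> 0"
      by auto
    have pos: "0 < \<bar>Im z\<bar>\<^sup>2 / 2"
      using z by simp
    have "\<bar>Im z\<bar>\<^sup>2 / 2 \<le> \<bar>Im w\<bar> * \<bar>Im z\<bar>"
      using mult_right_mono[of "\<bar>Im z\<bar> / 2" "\<bar>Im w\<bar>" "\<bar>Im z\<bar>"] elim by (simp add: power2_eq_square)
    with pos have "1 / (\<bar>Im w\<bar> * \<bar>Im z\<bar>) \<le> 1 / (\<bar>Im z\<bar>\<^sup>2 / 2)"
      using w z by (intro divide_left_mono) auto
    show ?case
    proof
      fix y
      have "norm (block21 w y - block21 z y) \<le> cmod (w - z) * (1 / (\<bar>Im w\<bar> * \<bar>Im z\<bar>)) * norm y"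
        using norm_block21_diff[OF z w, of y] by simp
      also have "\<dots> \<le> cmod (w - z) * (2 / \<bar>Im z\<bar>\<^sup>2) * norm y"
        using \<open>1 / (\<bar>Im w\<bar> * \<bar>Im z\<bar>) \<le> 1 / (\<bar>Im z\<bar>\<^sup>2 / 2)\<close>
        by (intro mult_right_mono mult_left_mono) auto
      finally show "norm (block21 w y - block21 z y) \<le> 2 / \<bar>Im z\<bar>\<^sup>2 * cmod (w - z) * norm y"
        by (simp add: mult_ac)
    qed
  qed
  moreover have "2 / \<bar>Im z\<bar>\<^sup>2 \<ge> 0"
    by simp
  ultimately show ?thesis
    unfolding op_lipschitz_near_def by blast
qed

lemma op_bounded_near_weyl_slope:
  assumes P: "Im z * Im \<mu> > 0"
  shows "op_bounded_near z (weyl_slope \<mu>)"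
proof -
  define B where "B = (1 + (cmod (\<mu> - z) + \<bar>Im z\<bar> / 2) / \<bar>Im \<mu>\<bar>) / (\<bar>Im z\<bar> / 2)"
  have "\<forall>\<^sub>F w in nhds z. op_bound (weyl_slope \<mu> w) B"
    using eventually_same_half_plane[OF P]
  proof eventually_elim
    case (elim w)
    have "(1 + cmod (\<mu> - w) / \<bar>Im \<mu>\<bar>) / \<bar>Im w\<bar> \<le> B"
      unfolding B_def using elim P
      by (intro frac_le add_left_mono divide_right_mono) (auto simp: zero_less_mult_iff)
    with op_bound_weyl_slope[of w \<mu>] elim show ?case
      unfolding op_bound_def by (meson mult_right_mono norm_ge_zero order_trans)
  qed
  moreover have "B \<ge> 0"
    unfolding B_def by simp
  ultimately show ?thesis
    unfolding op_bounded_near_def by blast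
qed

lemma op_lipschitz_near_weyl_resolvent:
  assumes P: "Im z * Im \<mu> > 0"
  shows "op_lipschitz_near z (weyl_resolvent \<mu>)"
proof -
  obtain B where "B \<ge> 0" and B: "\<forall>\<^sub>F w in nhds z. op_bound (weyl_slope \<mu> w) B"
    using op_bounded_near_weyl_slope[OF P] unfolding op_bounded_near_def by blast
  define K where "K = (1 + cmod (z - \<mu>) / \<bar>Im \<mu>\<bar>) / \<bar>Im z\<bar>"
  have K: "op_bound (gamma_field \<mu> z) K" "K \<ge> 0"
    unfolding K_def using op_bound_gamma_field[OF P] by simp_all
  have "\<forall>\<^sub>F w in nhds z. \<forall>u.
      norm (weyl_resolvent \<mu> w u - weyl_resolvent \<mu> z u) \<le> B * K * cmod (w - z) * norm u"
    using B eventually_same_half_plane[OF P]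
  proof eventually_elim
    case (elim w)
    show ?case
    proof
      fix u
      have "norm (weyl_resolvent \<mu> w u - weyl_resolvent \<mu> z u)
          = cmod (w - z) * norm (weyl_slope \<mu> w (gamma_field \<mu> z u))"
        using elim by (simp add: weyl_resolvent_identity[OF P] norm_scaleC)
      also have "\<dots> \<le> cmod (w - z) * (B * (K * norm u))"
      proof (rule mult_left_mono)
        have "norm (weyl_slope \<mu> w (gamma_field \<mu> z u)) \<le> B * norm (gamma_field \<mu> z u)"
          using elim(1) unfolding op_bound_def by blast
        also have "\<dots> \<le> B * (K * norm u)"
          using K(1) \<open>B \<ge> 0\<close> unfolding op_bound_def by (simp add: mult_left_mono)
        finally show "norm (weyl_slope \<mu> w (gamma_field \<mu> z u)) \<le> B * (K * norm u)" .
      qed simp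
      finally show "norm (weyl_resolvent \<mu> w u - weyl_resolvent \<mu> z u) \<le> B * K * cmod (w - z) * norm u"
        by (simp add: mult_ac)
    qed
  qed
  moreover have "B * K \<ge> 0"
    using \<open>B \<ge> 0\<close> K(2) by simp
  ultimately show ?thesis
    unfolding op_lipschitz_near_def by blast
qed

lemma op_lipschitz_near_weyl_slope:
  assumes P: "Im z * Im \<mu> > 0"
  shows "op_lipschitz_near z (weyl_slope \<mu>)"
proof -
  have z: "Im z \<noteq> 0"
    using P by auto
  have "op_lipschitz_near z (\<lambda>w y. weyl_resolvent \<mu> w (block21 w y))"
  proof (rule op_lipschitz_near_compose[where F = "weyl_resolvent \<mu>" and G = block21])
    show "\<forall>\<^sub>F w in nhds z. clinear_op (weyl_resolvent \<mu> w)"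
      using eventually_same_half_plane[OF P] by eventually_elim (simp add: clinear_weyl_resolvent)
    show "op_bounded_near z (weyl_resolvent \<mu>)"
      unfolding op_bounded_near_def using eventually_same_half_plane[OF P]
      by (intro exI[of _ "1 / \<bar>Im \<mu>\<bar>"] conjI) (auto elim!: eventually_mono simp: op_bound_weyl_resolvent)
    show "op_lipschitz_near z (weyl_resolvent \<mu>)"
      by (rule op_lipschitz_near_weyl_resolvent[OF P])
    show "op_lipschitz_near z block21"
      by (rule op_lipschitz_near_block21[OF z])
    show "op_bound (block21 z) (1 / \<bar>Im z\<bar>)"
      by (rule op_bound_block21[OF z])
  qed
  then have "op_lipschitz_near z (\<lambda>w y. (\<mu> - w) *\<^sub>C weyl_resolvent \<mu> w (block21 w y))"
    using op_bound_compose[OF op_bound_weyl_resolvent[OF P] op_bound_block21[OF z]]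
    by (rule op_lipschitz_near_scaleC_affine) simp
  with op_lipschitz_near_block21[OF z] show ?thesis
    unfolding weyl_slope_def[abs_def] by (rule op_lipschitz_near_diff)
qed

lemma op_holomorphic_on_weyl_resolvent:
  assumes "Im \<mu> \<noteq> 0"
  shows "op_holomorphic_on {z. Im z * Im \<mu> > 0} (weyl_resolvent \<mu>)"
  unfolding op_holomorphic_on_def
proof (intro conjI ballI)
  show "open {z. Im z * Im \<mu> > 0}"
    using open_Collect_less[of "\<lambda>z. 0" "\<lambda>z. Im z * Im \<mu>"] by (simp add: continuous_intros)
  fix z assume "z \<in> {z. Im z * Im \<mu> > 0}"
  then have P: "Im z * Im \<mu> > 0"
    by simp
  show "bounded_op (weyl_resolvent \<mu> z)"
    by (rule bounded_opI[OF clinear_weyl_resolvent[OF P] op_bound_weyl_resolvent[OF P]])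
  let ?K = "(1 + cmod (z - \<mu>) / \<bar>Im \<mu>\<bar>) / \<bar>Im z\<bar>"
  let ?D = "\<lambda>u. weyl_slope \<mu> z (gamma_field \<mu> z u)"
  have "bounded_op ?D"
    using clinear_op_compose[OF clinear_weyl_slope[OF P] clinear_gamma_field[OF P]]
      op_bound_compose[OF op_bound_weyl_slope[OF P] op_bound_gamma_field[OF P]]
    by (rule bounded_opI) simp
  moreover have "\<forall>\<^sub>F w in nhds z. \<forall>u.
      weyl_resolvent \<mu> w u - weyl_resolvent \<mu> z u = (w - z) *\<^sub>C weyl_slope \<mu> w (gamma_field \<mu> z u)"
    using eventually_same_half_plane[OF P] by eventually_elim (simp add: weyl_resolvent_identity[OF P])
  then have "((\<lambda>w. onorm (\<lambda>u. (1 / (w - z)) *\<^sub>C (weyl_resolvent \<mu> w u - weyl_resolvent \<mu> z u) - ?D u))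
      \<longlongrightarrow> 0) (at z)"
    by (rule op_difference_quotient_tendsto[OF _ op_lipschitz_near_weyl_slope[OF P]
          op_bound_gamma_field[OF P]]) simp
  ultimately show "\<exists>D. bounded_op D \<and>
      ((\<lambda>w. onorm (\<lambda>u. (1 / (w - z)) *\<^sub>C (weyl_resolvent \<mu> w u - weyl_resolvent \<mu> z u) - D u))
        \<longlongrightarrow> 0) (at z)"
    by blast
qed

lemma nevanlinna_family_M: "nevanlinna_family M"
proof -
  have graph: "rel_shift_inv (M z) \<mu> = op_graph (weyl_resolvent \<mu> z)" if "Im z * Im \<mu> > 0" for z \<mu>
    using that by (intro rel_shift_inv_eq_graph csubspace_M shift_surj_M shift_inj_M)
  have "{z. Im z * Im (- \<i>) > 0} = {z. Im z < 0}"
    by (auto simp: zero_less_mult_iff)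
  then have "op_holomorphic_on {z. Im z < 0} (weyl_resolvent (- \<i>))"
    using op_holomorphic_on_weyl_resolvent[of "- \<i>"] by simp
  moreover have "op_holomorphic_on {z. Im z > 0} (weyl_resolvent \<i>)"
    using op_holomorphic_on_weyl_resolvent[of \<i>] by simp
  ultimately show ?thesis
    unfolding nevanlinna_family_def
    using max_dissipative_M max_accumulative_M rel_adj_M graph[of _ \<i>] graph[of _ "- \<i>"]
    by (intro conjI allI impI exI[of _ \<i>] exI[of _ "- \<i>"] exI[of _ "weyl_resolvent \<i>"]
        exI[of _ "weyl_resolvent (- \<i>)"]) auto
qed

end

theorem mainTheorem13:
  fixes A :: "('h::chilbert \<times> 'h) set"
    and \<Gamma> :: "(('h \<times> 'h) \<times> ('k::chilbert \<times> 'k)) set"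
    and H :: "('h \<times> 'h) set"
    and x :: real
  assumes "closed_symmetric A"
    and "isometric_boundary_pair A \<Gamma>"
    and "selfadjoint_rel H" and "A \<subseteq> H" and "H \<subseteq> Domain \<Gamma>"
    and "complex_of_real x \<in> rel_resolvent_set H"
  shows "((selfadjoint_rel (weyl_family \<Gamma> (complex_of_real x)) \<and>
            0 \<in> rel_resolvent_set (rel_plus_scalar (weyl_family \<Gamma> (complex_of_real x)) (complex_of_real x)))
          \<longleftrightarrow> complex_of_real x \<in> rel_resolvent_set (main_transform \<Gamma>))
       \<and> (complex_of_real x \<in> rel_resolvent_set (main_transform \<Gamma>) \<longrightarrow>
            unitary_boundary_pair A \<Gamma> \<and> nevanlinna_family (weyl_family \<Gamma>))"
proof -
  have I: "isometric_rel \<Gamma>"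
    using assms(2) unfolding isometric_boundary_pair_def by blast
  have "(selfadjoint_rel (weyl_family \<Gamma> (complex_of_real x)) \<and>
          0 \<in> rel_resolvent_set (rel_plus_scalar (weyl_family \<Gamma> (complex_of_real x)) (complex_of_real x)))
        \<longleftrightarrow> complex_of_real x \<in> rel_resolvent_set (main_transform \<Gamma>)"
    using weyl_family_resolvent_if_transform_resolvent[OF I]
      transform_resolvent_if_weyl_family_resolvent[OF I assms(5,6)] by blast
  moreover have "unitary_boundary_pair A \<Gamma> \<and> nevanlinna_family (weyl_family \<Gamma>)"
    if "complex_of_real x \<in> rel_resolvent_set (main_transform \<Gamma>)"
  proof -
    interpret regular_main_transform \<Gamma> x
      using I that by unfold_locales
    show ?thesis
      using assms(2) unitary nevanlinna_family_M
      unfolding isometric_boundary_pair_def unitary_boundary_pair_def by blast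
  qed
  ultimately show ?thesis
    by blast
qed

end
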